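(* Let $K$ be an alphabet space, $\sigma:K\to K^+$ a primitive generalized substitution, and $(X_\sigma,S)$ the generalized subshift it generates. Then: (1) $(X_\sigma,S)$ is minimal; (2) if moreover $\sigma$ is recognizable and aperiodic, then $(X_\sigma,S)$ is a self-induced minimal Cantor system, and $\sigma$ (acting on sequences) is a conjugacy from $(X_\sigma,S)$ to the induced system $(\sigma(X_\sigma),S_{\sigma(X_\sigma)})$.
   Context: An alphabet space is a compact zero-dimensional metric space $K$ with at least two points; $K^n$ is the set of words of length $n$ (with product topology), $K^+=\bigcup_{n\ge1}K^n$. A generalized substitution is a map $\sigma:K\to K^+$ such that $a\mapsto|\sigma(a)|$ is continuous and, for each $j$, the map $a\mapsto$ ($j$-th letter of $\sigma(a)$) is continuous on $\{a:|\sigma(a)|\ge j\}$. It extends to $K^+$ by concatenation (so it can be iterated) and to $K^{\mathbb Z}$ by $\sigma(\ldots x_{-1}.x_0x_1\ldots)=\ldots\sigma(x_{-1}).\sigma(x_0)\sigma(x_1)\ldots$ with $\sigma(x_0)$ starting at coordinate $0$. $\sigma$ is primitive if for every nonempty open $V\subset K$ there is $j$ such that for all $a\in K$ and all $k\ge j$ some letter of $\sigma^k(a)$ lies in $V$. The language $\mathcal L(\sigma,a)$ is the set of words $w\in K^+$ that are subwords of some $\sigma^j(a)$, $j\in\mathbb N$, or limits in $K^{|w|}$ of such words; $\mathcal L(\sigma)=\bigcup_{a\in K}\mathcal L(\sigma,a)$. $X_\sigma=\{\mathbf x\in K^{\mathbb Z}:\mathbf x[-n,n]\in\mathcal L(\sigma)\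 \forall n\ge0\}$, with the shift $S(\mathbf x)_i=x_{i+1}$. $\sigma$ is aperiodic if $X_\sigma$ contains no $S$-periodic point. $\sigma$ is recognizable if for every $\mathbf z\in X_\sigma$ there is a unique set of integers $\{n_k:k\in\mathbb Z\}$ and a unique $\mathbf x\in X_\sigma$ with $\sigma(x_k)=\mathbf z[n_k,n_{k+1}-1]$ for all $k$. For a minimal Cantor system $(X,T)$ and clopen $U$, the induced map is $T_U(x)=T^{r_U(x)}x$ with $r_U(x)=\inf\{n>0:T^nx\in U\}$; $(X,T)$ is self-induced if $(U,T_U)$ is conjugate to $(X,T)$ for some nonempty clopen $U\subsetneq X$. *)

theory Defs
  imports "HOL-Analysis.Analysis" "HOL-Library.Sublist"
begin

text \<open>In the main theorem the alphabet space K is the whole (metric) type 'a, i.e. K = UNIV.\<close>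

definition zero_dimensional_space :: "'a::topological_space set \<Rightarrow> bool" where
  "zero_dimensional_space K \<longleftrightarrow>
     (\<forall>U x. openin (top_of_set K) U \<and> x \<in> U \<longrightarrow>
        (\<exists>V. openin (top_of_set K) V \<and> closedin (top_of_set K) V \<and> x \<in> V \<and> V \<subseteq> U))"

definition alphabet_space :: "'a::metric_space set \<Rightarrow> bool" where
  "alphabet_space K \<longleftrightarrow> compact K \<and> zero_dimensional_space K
     \<and> (\<exists>a\<in>K. \<exists>b\<in>K. a \<noteq> b)"

definition gen_substitution :: "('a::metric_space \<Rightarrow> 'a list) \<Rightarrow> bool" where
  "gen_substitution \<sigma> \<longleftrightarrow>
     (\<forall>a. \<sigma> a \<noteq> []) \<and>
     continuous_on UNIV (\<lambda>a. length (\<sigma> a)) \<and>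
     (\<forall>j. continuous_on {a. j < length (\<sigma> a)} (\<lambda>a. \<sigma> a ! j))"

definition subst_word :: "('a \<Rightarrow> 'a list) \<Rightarrow> 'a list \<Rightarrow> 'a list" where
  "subst_word \<sigma> w = concat (map \<sigma> w)"

definition subst_iter :: "('a \<Rightarrow> 'a list) \<Rightarrow> nat \<Rightarrow> 'a \<Rightarrow> 'a list" where
  "subst_iter \<sigma> k a = (subst_word \<sigma> ^^ k) [a]"

definition primitive :: "('a::topological_space \<Rightarrow> 'a list) \<Rightarrow> bool" where
  "primitive \<sigma> \<longleftrightarrow>
     (\<forall>V. open V \<and> V \<noteq> {} \<longrightarrow>
        (\<exists>j. \<forall>a. \<forall>k\<ge>j. \<exists>x\<in>set (subst_iter \<sigma> k a). x \<in> V))"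

text \<open>Language: subwords of some sigma^j(a), or limits in K^|w| (product topology) of such.\<close>
definition language_of :: "('a::metric_space \<Rightarrow> 'a list) \<Rightarrow> 'a \<Rightarrow> 'a list set" where
  "language_of \<sigma> a = {w. w \<noteq> [] \<and>
     (\<forall>e>0. \<exists>j u. sublist u (subst_iter \<sigma> j a) \<and> length u = length w \<and>
                 (\<forall>i<length w. dist (u ! i) (w ! i) < e))}"

definition language :: "('a::metric_space \<Rightarrow> 'a list) \<Rightarrow> 'a list set" where
  "language \<sigma> = (\<Union>a. language_of \<sigma> a)"

definition window :: "(int \<Rightarrow> 'a) \<Rightarrow> int \<Rightarrow> int \<Rightarrow> 'a list" where
  "window x m n = map x [m..n]"

definition subshift :: "('a::metric_space \<Rightarrow> 'a list) \<Rightarrow> (int \<Rightarrow> 'a) set" where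
  "subshift \<sigma> = {x. \<forall>n::nat. window x (- int n) (int n) \<in> language \<sigma>}"

definition shift :: "(int \<Rightarrow> 'a) \<Rightarrow> (int \<Rightarrow> 'a)" where
  "shift x = (\<lambda>i. x (i + 1))"

text \<open>Position in sigma(x) at which the block sigma(x_k) starts (sigma(x_0) starts at 0).\<close>
definition subst_pos :: "('a \<Rightarrow> 'a list) \<Rightarrow> (int \<Rightarrow> 'a) \<Rightarrow> int \<Rightarrow> int" where
  "subst_pos \<sigma> x k =
     (if k \<ge> 0 then int (\<Sum>i\<in>{0..<k}. length (\<sigma> (x i)))
      else - int (\<Sum>i\<in>{k..<0}. length (\<sigma> (x i))))"

definition subst_seq :: "('a \<Rightarrow> 'a list) \<Rightarrow> (int \<Rightarrow> 'a) \<Rightarrow> (int \<Rightarrow> 'a)" where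
  "subst_seq \<sigma> x = (\<lambda>n.
     let k = (THE k. subst_pos \<sigma> x k \<le> n \<and> n < subst_pos \<sigma> x (k + 1))
     in \<sigma> (x k) ! nat (n - subst_pos \<sigma> x k))"

definition aperiodic :: "('a::metric_space \<Rightarrow> 'a list) \<Rightarrow> bool" where
  "aperiodic \<sigma> \<longleftrightarrow> \<not> (\<exists>x\<in>subshift \<sigma>. \<exists>p::nat. p > 0 \<and> (shift ^^ p) x = x)"

text \<open>Recognizability: unique cutting set {n_k} (indexed with n_0 \<le> 0 < n_1) and unique x.\<close>
definition recognizable :: "('a::metric_space \<Rightarrow> 'a list) \<Rightarrow> bool" where
  "recognizable \<sigma> \<longleftrightarrow>
     (\<forall>z\<in>subshift \<sigma>. \<exists>!(C, x). x \<in> subshift \<sigma> \<and>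
        (\<exists>n::int \<Rightarrow> int. C = range n \<and> n 0 \<le> 0 \<and> 0 < n 1 \<and>
           (\<forall>k. \<sigma> (x k) = window z (n k) (n (k + 1) - 1))))"

definition minimal_system :: "'b::topological_space set \<Rightarrow> ('b \<Rightarrow> 'b) \<Rightarrow> bool" where
  "minimal_system X T \<longleftrightarrow> X \<noteq> {} \<and>
     (\<forall>Y. Y \<subseteq> X \<and> closedin (top_of_set X) Y \<and> Y \<noteq> {} \<and> T ` Y \<subseteq> Y \<longrightarrow> Y = X)"

definition totally_disconnected_set :: "'b::topological_space set \<Rightarrow> bool" where
  "totally_disconnected_set X \<longleftrightarrow>
     (\<forall>C. C \<subseteq> X \<and> connected C \<longrightarrow> (\<forall>x\<in>C. \<forall>y\<in>C. x = y))"

definition cantor_set :: "'b::metric_space set \<Rightarrow> bool" where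
  "cantor_set X \<longleftrightarrow> X \<noteq> {} \<and> compact X \<and> totally_disconnected_set X \<and> (\<forall>x\<in>X. x islimpt X)"

definition minimal_cantor_system :: "'b::metric_space set \<Rightarrow> ('b \<Rightarrow> 'b) \<Rightarrow> bool" where
  "minimal_cantor_system X T \<longleftrightarrow> cantor_set X \<and>
     (\<exists>g. homeomorphism X X T g) \<and> minimal_system X T"

definition return_time :: "('b \<Rightarrow> 'b) \<Rightarrow> 'b set \<Rightarrow> 'b \<Rightarrow> nat" where
  "return_time T U x = (LEAST n. n > 0 \<and> (T ^^ n) x \<in> U)"

definition induced_map :: "('b \<Rightarrow> 'b) \<Rightarrow> 'b set \<Rightarrow> 'b \<Rightarrow> 'b" where
  "induced_map T U x = (T ^^ return_time T U x) x"

definition conjugacy :: "('b::topological_space \<Rightarrow> 'c::topological_space) \<Rightarrow>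
     'b set \<Rightarrow> ('b \<Rightarrow> 'b) \<Rightarrow> 'c set \<Rightarrow> ('c \<Rightarrow> 'c) \<Rightarrow> bool" where
  "conjugacy \<phi> X T Y R \<longleftrightarrow> (\<exists>g. homeomorphism X Y \<phi> g) \<and> (\<forall>x\<in>X. \<phi> (T x) = R (\<phi> x))"

definition self_induced :: "'b::metric_space set \<Rightarrow> ('b \<Rightarrow> 'b) \<Rightarrow> bool" where
  "self_induced X T \<longleftrightarrow>
     (\<exists>U. U \<noteq> {} \<and> U \<subset> X \<and> openin (top_of_set X) U \<and> closedin (top_of_set X) U \<and>
          (\<exists>\<phi>. conjugacy \<phi> U (induced_map T U) X T))"

end

theory Submission
  imports Defs
begin

text \<open>
  Primitivity makes the language independent of the seed letter and forces every word of it to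
  occur, up to any precision, in \<open>\<sigma>\<^sup>P(c)\<close> for all letters \<open>c\<close> simultaneously. Every long
  enough word of the language contains a whole block \<open>\<sigma>\<^sup>P(c)\<close>, so every orbit in \<open>X\<^sub>\<sigma>\<close>
  approaches every point: the system is minimal, and without periodic points it has no isolated
  points either.

  Recognizability makes \<open>\<sigma>\<close> injective on \<open>X\<^sub>\<sigma>\<close> and writes every point uniquely as
  \<open>S\<^sup>m \<sigma>(x)\<close> with \<open>0 \<le> m < |\<sigma>(x\<^sub>0)|\<close>. Hence \<open>\<sigma>(x)\<close> first returns to \<open>\<sigma>(X\<^sub>\<sigma>)\<close> after
  exactly \<open>|\<sigma>(x\<^sub>0)|\<close> steps, at \<open>\<sigma>(S x)\<close>, so \<open>\<sigma>\<close> conjugates \<open>S\<close> to the induced map. The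
  image is clopen, its complement being a finite union of compact sets \<open>S\<^sup>m \<sigma>(\<dots>)\<close>, and
  proper because some letter of \<open>X\<^sub>\<sigma>\<close> has an image of length at least 2.
\<close>

section \<open>Words and approximate occurrences\<close>

definition occurs_at :: "'a list \<Rightarrow> 'a list \<Rightarrow> nat \<Rightarrow> bool" where
  "occurs_at u v t \<longleftrightarrow> t + length u \<le> length v \<and> (\<forall>i<length u. v ! (t + i) = u ! i)"

definition approx_occurs_at :: "real \<Rightarrow> 'a::metric_space list \<Rightarrow> 'a list \<Rightarrow> nat \<Rightarrow> bool" where
  "approx_occurs_at e u v t \<longleftrightarrow>
     t + length u \<le> length v \<and> (\<forall>i<length u. dist (v ! (t + i)) (u ! i) < e)"

definition close_words :: "real \<Rightarrow> 'a::metric_space list \<Rightarrow> 'a list \<Rightarrow> bool" where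
  "close_words e u v \<longleftrightarrow> list_all2 (\<lambda>x y. dist x y < e) u v"

lemma approx_occurs_at_trans:
  assumes "approx_occurs_at e1 u v t" "approx_occurs_at e2 v w s"
  shows "approx_occurs_at (e1 + e2) u w (s + t)"
  unfolding approx_occurs_at_def
proof safe
  show "s + t + length u \<le> length w"
    using assms unfolding approx_occurs_at_def by auto
  fix i assume i: "i < length u"
  have "dist (w ! (s + t + i)) (u ! i)
      \<le> dist (w ! (s + (t + i))) (v ! (t + i)) + dist (v ! (t + i)) (u ! i)"
    by (simp add: add.assoc dist_triangle)
  also have "\<dots> < e2 + e1"
    using assms i unfolding approx_occurs_at_def by (intro add_strict_mono) auto
  finally show "dist (w ! (s + t + i)) (u ! i) < e1 + e2" by simp
qed

lemma approx_occurs_at_occurs_at_trans: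
  "approx_occurs_at e u v t \<Longrightarrow> occurs_at v w s \<Longrightarrow> approx_occurs_at e u w (s + t)"
  unfolding occurs_at_def approx_occurs_at_def by (auto simp: add.assoc)

lemma occurs_at_approx_occurs_at_trans:
  assumes "occurs_at u v t" "approx_occurs_at e v w s"
  shows "approx_occurs_at e u w (s + t)"
  unfolding approx_occurs_at_def
proof safe
  show "s + t + length u \<le> length w"
    using assms unfolding occurs_at_def approx_occurs_at_def by auto
  fix i assume "i < length u"
  with assms have "t + i < length v" "v ! (t + i) = u ! i"
    unfolding occurs_at_def by auto
  with assms(2) show "dist (w ! (s + t + i)) (u ! i) < e"
    unfolding approx_occurs_at_def by (metis add.assoc)
qed

lemma occurs_at_imp_approx_occurs_at: "occurs_at u v t \<Longrightarrow> e > 0 \<Longrightarrow> approx_occurs_at e u v t"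
  unfolding occurs_at_def approx_occurs_at_def by auto

lemma sublist_iff_occurs_at: "sublist u v \<longleftrightarrow> (\<exists>t. occurs_at u v t)"
proof
  assume "sublist u v"
  then obtain ps ss where "v = ps @ u @ ss" unfolding sublist_def by blast
  then have "occurs_at u v (length ps)" unfolding occurs_at_def by (auto simp: nth_append)
  then show "\<exists>t. occurs_at u v t" by blast
next
  assume "\<exists>t. occurs_at u v t"
  then obtain t where t: "occurs_at u v t" by blast
  then have "u = take (length u) (drop t v)"
    unfolding occurs_at_def by (intro nth_equalityI) auto
  moreover have "v = take t v @ take (length u) (drop t v) @ drop (length u) (drop t v)"
    by (metis append_take_drop_id)
  ultimately show "sublist u v" unfolding sublist_def by metis
qed

lemma approx_occurs_at_take_drop:
  assumes "approx_occurs_at e u v t"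
  shows "close_words e (take (length u) (drop t v)) u"
    and "occurs_at (take (length u) (drop t v)) v t"
  using assms unfolding approx_occurs_at_def occurs_at_def close_words_def
  by (auto simp: list_all2_conv_all_nth add.commute)

lemma close_words_imp_approx_occurs_at: "close_words e v u \<Longrightarrow> approx_occurs_at e u v 0"
  unfolding close_words_def approx_occurs_at_def by (auto simp: list_all2_conv_all_nth)

lemma close_words_concat:
  assumes "list_all2 (\<lambda>x y. close_words e (f x) (g y)) xs ys"
  shows "close_words e (concat (map f xs)) (concat (map g ys))"
  using assms unfolding close_words_def
  by (induction rule: list_all2_induct) (auto intro: list_all2_appendI)

lemma occurs_at_concat_map:
  assumes "x \<in> set xs"
  shows "\<exists>s. occurs_at (f x) (concat (map f xs)) s"
proof -
  obtain ys zs where "xs = ys @ x # zs" using split_list[OF assms] by blast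
  then have "occurs_at (f x) (concat (map f xs)) (length (concat (map f ys)))"
    unfolding occurs_at_def by (auto simp: nth_append)
  then show ?thesis by blast
qed

lemma approx_occurs_at_within:
  assumes "approx_occurs_at e v w t" "occurs_at u w s" "t \<le> s" "s + length u \<le> t + length v"
  shows "approx_occurs_at e u v (s - t)"
  unfolding approx_occurs_at_def
proof safe
  show "s - t + length u \<le> length v" using assms(3,4) by simp
  fix i assume i: "i < length u"
  then have "s - t + i < length v" using assms(3,4) by simp
  then have "dist (w ! (t + (s - t + i))) (v ! (s - t + i)) < e"
    using assms(1) unfolding approx_occurs_at_def by blast
  moreover have "w ! (t + (s - t + i)) = u ! i"
    using assms(2,3) i unfolding occurs_at_def by simp
  ultimately show "dist (v ! (s - t + i)) (u ! i) < e" by (simp add: dist_commute)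
qed

lemma length_concat_map_ge:
  assumes "\<forall>x\<in>set xs. m \<le> length (f x)"
  shows "m * length xs \<le> length (concat (map f xs))"
  using assms by (induction xs) auto

lemma occurs_at_concat_map_within:
  assumes "\<forall>x\<in>set xs. length (f x) \<le> M"
    and "t + L \<le> length (concat (map f xs))" and "2 * M \<le> L" and "0 < L"
  shows "\<exists>x\<in>set xs. \<exists>s. t \<le> s \<and> s + length (f x) \<le> t + L \<and> occurs_at (f x) (concat (map f xs)) s"
  using assms
proof (induction xs arbitrary: t)
  case Nil
  then show ?case by simp
next
  case (Cons x xs)
  have concat_Cons: "concat (map f (x # xs)) = f x @ concat (map f xs)" by simp
  show ?case
  proof (cases "length (f x) \<le> t")
    case True
    have "\<exists>y\<in>set xs. \<exists>s. t - length (f x) \<le> s \<and> s + length (f y) \<le> t - length (f x) + L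
        \<and> occurs_at (f y) (concat (map f xs)) s"
      using Cons.prems True by (intro Cons.IH) auto
    then obtain y s where y: "y \<in> set xs" "t - length (f x) \<le> s"
        "s + length (f y) \<le> t - length (f x) + L" "occurs_at (f y) (concat (map f xs)) s"
      by blast
    have "occurs_at (f y) (concat (map f (x # xs))) (length (f x) + s)"
      using y(4) unfolding occurs_at_def concat_Cons by (auto simp: nth_append)
    then show ?thesis using y True by (intro bexI[of _ y] exI[of _ "length (f x) + s"]) auto
  next
    case False
    show ?thesis
    proof (cases "t = 0")
      case True
      have "occurs_at (f x) (concat (map f (x # xs))) 0"
        unfolding occurs_at_def concat_Cons by (auto simp: nth_append)
      then show ?thesis using True Cons.prems by (intro bexI[of _ x] exI[of _ 0]) auto
    next
      case t_pos: False
      have "length (f x) \<le> M" using Cons.prems by auto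
      moreover have "t + L \<le> length (f x) + length (concat (map f xs))" using Cons.prems(2) by simp
      ultimately obtain y ys where xs: "xs = y # ys" using Cons.prems(3) False by (cases xs) auto
      have "occurs_at (f y) (concat (map f (x # xs))) (length (f x))"
        unfolding occurs_at_def concat_Cons xs by (auto simp: nth_append)
      then show ?thesis using False \<open>length (f x) \<le> M\<close> Cons.prems xs
        by (intro bexI[of _ y] exI[of _ "length (f x)"]) auto
    qed
  qed
qed

definition word_continuous_at :: "('a::metric_space \<Rightarrow> 'b::metric_space list) \<Rightarrow> 'a \<Rightarrow> bool" where
  "word_continuous_at f a \<longleftrightarrow> (\<forall>e>0. \<forall>\<^sub>F b in nhds a. close_words e (f b) (f a))"

lemma word_continuous_at_length:
  "word_continuous_at f a \<Longrightarrow> \<forall>\<^sub>F b in nhds a. length (f b) = length (f a)"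
  unfolding word_continuous_at_def close_words_def
  by (metis (mono_tags) eventually_mono list_all2_lengthD zero_less_one)

lemma word_continuous_at_uniform:
  assumes "\<And>i. i < length w \<Longrightarrow> word_continuous_at f (w ! i)" "e > 0"
  shows "\<exists>d>0. \<forall>i<length w. \<forall>b. dist b (w ! i) < d \<longrightarrow> close_words e (f b) (f (w ! i))"
proof -
  have "\<forall>i\<in>{..<length w}. \<exists>d>0. \<forall>b. dist b (w ! i) < d \<longrightarrow> close_words e (f b) (f (w ! i))"
    using assms unfolding word_continuous_at_def eventually_nhds_metric by blast
  then obtain d where d: "\<And>i. i < length w \<Longrightarrow> d i > 0"
      "\<And>i b. i < length w \<Longrightarrow> dist b (w ! i) < d i \<Longrightarrow> close_words e (f b) (f (w ! i))"
    by (metis lessThan_iff)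
  define D where "D = Min (insert 1 (d ` {..<length w}))"
  have "D > 0" unfolding D_def using d by auto
  moreover have "D \<le> d i" if "i < length w" for i unfolding D_def using that by auto
  ultimately show ?thesis using d(2) by (meson less_le_trans)
qed

lemma list_all2_close_words_image:
  assumes "\<forall>i<length w. \<forall>b. dist b (w ! i) < d \<longrightarrow> close_words e (f b) (f (w ! i))"
    and "close_words d u w"
  shows "list_all2 (\<lambda>x y. close_words e (f x) (f y)) u w"
  using assms unfolding close_words_def list_all2_conv_all_nth by auto

lemma word_continuous_at_concat_map:
  assumes "word_continuous_at f a" "\<And>c. word_continuous_at g c"
  shows "word_continuous_at (\<lambda>b. concat (map g (f b))) a"
  unfolding word_continuous_at_def
proof (intro allI impI)
  fix e :: real assume "e > 0"
  then obtain d where "d > 0"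
    and d: "\<forall>i<length (f a). \<forall>b. dist b (f a ! i) < d \<longrightarrow> close_words e (g b) (g (f a ! i))"
    using word_continuous_at_uniform[of "f a" g e] assms(2) by blast
  have "\<forall>\<^sub>F b in nhds a. close_words d (f b) (f a)"
    using assms(1) \<open>d > 0\<close> unfolding word_continuous_at_def by blast
  then show "\<forall>\<^sub>F b in nhds a. close_words e (concat (map g (f b))) (concat (map g (f a)))"
    by (rule eventually_mono) (intro close_words_concat list_all2_close_words_image[OF d])
qed

lemma subst_word_simps [simp]:
  "subst_word \<sigma> [] = []"
  "subst_word \<sigma> (a # u) = \<sigma> a @ subst_word \<sigma> u"
  "subst_word \<sigma> (u @ v) = subst_word \<sigma> u @ subst_word \<sigma> v"
  unfolding subst_word_def by auto

lemma sublist_subst_word: "sublist u v \<Longrightarrow> sublist (subst_word \<sigma> u) (subst_word \<sigma> v)"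
  unfolding sublist_def by (metis subst_word_simps(3))

lemma subst_iter_0 [simp]: "subst_iter \<sigma> 0 a = [a]"
  by (simp add: subst_iter_def)

lemma subst_iter_Suc: "subst_iter \<sigma> (Suc k) a = subst_word \<sigma> (subst_iter \<sigma> k a)"
  by (simp add: subst_iter_def)

lemma funpow_subst_word: "(subst_word \<sigma> ^^ j) w = concat (map (subst_iter \<sigma> j) w)"
proof (induction j arbitrary: w)
  case 0
  then show ?case by (induction w) auto
next
  case (Suc j)
  then show ?case by (induction w) (auto simp: subst_iter_Suc)
qed

lemma subst_iter_add: "subst_iter \<sigma> (j + k) a = concat (map (subst_iter \<sigma> j) (subst_iter \<sigma> k a))"
proof -
  have "subst_iter \<sigma> (j + k) a = (subst_word \<sigma> ^^ j) (subst_iter \<sigma> k a)"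
    by (simp add: subst_iter_def funpow_add)
  then show ?thesis by (simp only: funpow_subst_word)
qed

lemma language_of_iff:
  "w \<in> language_of \<sigma> a \<longleftrightarrow> w \<noteq> [] \<and> (\<forall>e>0. \<exists>j t. approx_occurs_at e w (subst_iter \<sigma> j a) t)"
proof -
  have *: "(\<exists>j u. sublist u (subst_iter \<sigma> j a) \<and> length u = length w \<and>
                 (\<forall>i<length w. dist (u ! i) (w ! i) < e))
     \<longleftrightarrow> (\<exists>j t. approx_occurs_at e w (subst_iter \<sigma> j a) t)" for e
  proof
    assume "\<exists>j u. sublist u (subst_iter \<sigma> j a) \<and> length u = length w \<and>
                 (\<forall>i<length w. dist (u ! i) (w ! i) < e)"
    then obtain j u t where u: "occurs_at u (subst_iter \<sigma> j a) t" "length u = length w"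
        "\<forall>i<length w. dist (u ! i) (w ! i) < e"
      unfolding sublist_iff_occurs_at by blast
    have "approx_occurs_at e w u 0" using u(2,3) unfolding approx_occurs_at_def by auto
    then show "\<exists>j t. approx_occurs_at e w (subst_iter \<sigma> j a) t"
      using approx_occurs_at_occurs_at_trans[OF _ u(1)] by blast
  next
    assume "\<exists>j t. approx_occurs_at e w (subst_iter \<sigma> j a) t"
    then obtain j t where o: "approx_occurs_at e w (subst_iter \<sigma> j a) t" by blast
    let ?u = "take (length w) (drop t (subst_iter \<sigma> j a))"
    have "sublist ?u (subst_iter \<sigma> j a)"
      using approx_occurs_at_take_drop(2)[OF o] sublist_iff_occurs_at by blast
    moreover have "length ?u = length w" "\<forall>i<length w. dist (?u ! i) (w ! i) < e"
      using approx_occurs_at_take_drop(1)[OF o] unfolding close_words_def list_all2_conv_all_nth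
      by auto
    ultimately show "\<exists>j u. sublist u (subst_iter \<sigma> j a) \<and> length u = length w \<and>
                 (\<forall>i<length w. dist (u ! i) (w ! i) < e)"
      by blast
  qed
  show ?thesis by (simp only: language_of_def mem_Collect_eq *)
qed

lemma length_window [simp]: "length (window x m n) = nat (n - m + 1)"
  by (simp add: window_def)

lemma nth_window: "i < nat (n - m + 1) \<Longrightarrow> window x m n ! i = x (m + int i)"
  by (simp add: window_def nth_upto)

lemma window_ne: "m \<le> n \<Longrightarrow> window x m n \<noteq> []"
  by (simp add: window_def)

lemma window_translate: "window (\<lambda>i. x (i + d)) m n = window x (m + d) (n + d)"
  by (rule nth_equalityI) (auto simp: nth_window algebra_simps)

lemma window_append:
  assumes "m \<le> j" "j \<le> n + 1"
  shows "window x m n = window x m (j - 1) @ window x j n"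
  using assms by (cases "j = n + 1") (simp_all add: window_def upto_split1)

lemma occurs_at_window:
  assumes "m' \<le> m" "m \<le> n" "n \<le> n'"
  shows "occurs_at (window x m n) (window x m' n') (nat (m - m'))"
  using assms unfolding occurs_at_def by (auto simp: nth_window)

lemma funpow_shift: "(shift ^^ m) x = (\<lambda>i. x (i + int m))"
  by (induction m arbitrary: x) (auto simp: shift_def algebra_simps)

lemma continuous_on_reindex: "continuous_on UNIV (\<lambda>x::int \<Rightarrow> 'b::metric_space. \<lambda>i. x (g i))"
  by (intro continuous_on_coordinatewise_then_product continuous_on_product_coordinates)

lemma isCont_coordinate: "isCont (\<lambda>y::int \<Rightarrow> 'b::metric_space. y k) x"
  using continuous_on_eq_continuous_at[of UNIV "\<lambda>y::int \<Rightarrow> 'b. y k"] by simp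

lemma eventually_nhds_coordinate:
  fixes x :: "int \<Rightarrow> 'b::metric_space"
  assumes "eventually P (nhds (x k))"
  shows "eventually (\<lambda>y. P (y k)) (nhds x)"
proof -
  have "((\<lambda>y. y k) \<longlongrightarrow> x k) (nhds x)"
    using isCont_coordinate[of x k] tendsto_at_iff_tendsto_nhds[of "\<lambda>y::int \<Rightarrow> 'b. y k" x]
    by (simp add: isCont_def)
  then show ?thesis using assms by (rule filterlim_iff[THEN iffD1, rule_format])
qed

lemma cylinder_subset_open:
  fixes U :: "(int \<Rightarrow> 'a::metric_space) set"
  assumes "open U" "x \<in> U"
  shows "\<exists>n::nat. \<exists>e>0. \<forall>y. (\<forall>i. - int n \<le> i \<and> i \<le> int n \<longrightarrow> dist (y i) (x i) < e) \<longrightarrow> y \<in> U"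
proof -
  obtain r where r: "r > 0" "ball x r \<subseteq> U" using openE[OF assms] by blast
  \<comment> \<open>The metric on \<open>int \<Rightarrow> 'a\<close> enumerates coordinates by \<open>from_nat\<close>; all but the first
    \<open>N\<close> of them contribute at most \<open>(1/2)\<^sup>N\<close>.\<close>
  obtain N where N: "(1/2::real) ^ N < r/2" using real_arch_pow_inv[of "r/2" "1/2"] r by auto
  define n where "n = Max ((\<lambda>k. nat \<bar>from_nat k :: int\<bar>) ` {..N})"
  have n: "\<bar>from_nat k :: int\<bar> \<le> int n" if "k \<le> N" for k
  proof -
    have "nat \<bar>from_nat k :: int\<bar> \<le> n" unfolding n_def using that by (intro Max_ge) auto
    then show ?thesis by simp
  qed
  have "y \<in> U" if y: "\<forall>i. - int n \<le> i \<and> i \<le> int n \<longrightarrow> dist (y i) (x i) < r/4" for y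
  proof -
    have "Max {dist (x (from_nat k)) (y (from_nat k)) |k. k \<le> N} < r/4"
    proof (subst Max_less_iff, goal_cases)
      case 3
      show ?case
      proof safe
        fix k assume "k \<le> N"
        then have "- int n \<le> from_nat k" "from_nat k \<le> int n" using n[of k] by auto
        then show "dist (x (from_nat k)) (y (from_nat k)) < r/4" using y by (simp add: dist_commute)
      qed
    qed auto
    then have "dist x y < r" using dist_fun_le_dist_first_terms[of x y N] N by linarith
    then show ?thesis using r by auto
  qed
  then show ?thesis using r by (intro exI[of _ n] exI[of _ "r/4"]) auto
qed

lemma approx_occurs_at_window_shift:
  assumes "approx_occurs_at e (window x (- int n) (int n)) (window y 0 m) p"
    and "- int n \<le> i" "i \<le> int n"
  shows "dist ((shift ^^ (p + n)) y i) (x i) < e"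
proof -
  define k where "k = nat (i + int n)"
  have k: "k < nat (2 * int n + 1)" "i = - int n + int k" using assms(2,3) unfolding k_def by auto
  then have "p + k < nat (m + 1)" using assms(1) unfolding approx_occurs_at_def by simp
  moreover have "dist (window y 0 m ! (p + k)) (window x (- int n) (int n) ! k) < e"
    using assms(1) k(1) unfolding approx_occurs_at_def by simp
  ultimately show ?thesis using k by (simp add: nth_window funpow_shift add.commute)
qed

section \<open>Cuttings\<close>

lemma strict_mono_int:
  fixes p :: "int \<Rightarrow> 'b::order"
  assumes "\<And>k. p k < p (k + 1)"
  shows "strict_mono p"
proof
  fix j k :: int assume "j < k"
  then show "p j < p k"
  proof (induction k rule: int_gr_induct)
    case base
    then show ?case using assms by simp
  next
    case (step k)
    then show ?case using assms[of k] by (metis less_trans)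
  qed
qed

lemma strict_mono_int_add_le:
  fixes p :: "int \<Rightarrow> int"
  assumes "strict_mono p" "j \<le> k"
  shows "p j + (k - j) \<le> p k"
  using assms(2)
proof (induction k rule: int_ge_induct)
  case (step i)
  then show ?case using strict_monoD[OF assms(1), of i "i + 1"] by linarith
qed simp

lemma strict_mono_int_interval:
  fixes p :: "int \<Rightarrow> int"
  assumes "strict_mono p"
  shows "\<exists>k. p k \<le> n \<and> n < p (k + 1)"
proof -
  define k0 where "k0 = min 0 (n - p 0)"
  have "p k0 \<le> n"
    using strict_mono_int_add_le[OF assms, of k0 0] unfolding k0_def by linarith
  define d0 where "d0 = nat (\<bar>n - p 0\<bar> + 1 - k0)"
  have "n < p (k0 + int d0)"
    using strict_mono_int_add_le[OF assms, of 0 "k0 + int d0"] unfolding d0_def k0_def by linarith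
  define d where "d = (LEAST d::nat. n < p (k0 + int d))"
  have "n < p (k0 + int d)" unfolding d_def by (rule LeastI[of _ d0]) fact
  moreover have "d \<noteq> 0"
  proof
    assume "d = 0"
    with \<open>n < p (k0 + int d)\<close> \<open>p k0 \<le> n\<close> show False by simp
  qed
  moreover have "p (k0 + int (d - 1)) \<le> n"
    using not_less_Least[of "d - 1" "\<lambda>d. n < p (k0 + int d)"] \<open>d \<noteq> 0\<close>
    unfolding d_def[symmetric] by linarith
  ultimately show ?thesis by (intro exI[of _ "k0 + int (d - 1)"]) (simp add: of_nat_diff)
qed

lemma strict_mono_int_interval_unique:
  fixes p :: "int \<Rightarrow> int"
  assumes "strict_mono p" "p k \<le> n" "n < p (k + 1)" "p k' \<le> n" "n < p (k' + 1)"
  shows "k = k'"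
proof (rule ccontr)
  assume "k \<noteq> k'"
  then consider "k + 1 \<le> k'" | "k' + 1 \<le> k" by linarith
  then show False
  proof cases
    case 1
    then have "p (k + 1) \<le> p k'" using strict_mono_less_eq[OF assms(1)] by blast
    then show False using assms by simp
  next
    case 2
    then have "p (k' + 1) \<le> p k" using strict_mono_less_eq[OF assms(1)] by blast
    then show False using assms by simp
  qed
qed

definition cutting :: "('a \<Rightarrow> 'a list) \<Rightarrow> (int \<Rightarrow> 'a) \<Rightarrow> (int \<Rightarrow> int) \<Rightarrow> (int \<Rightarrow> 'a) \<Rightarrow> bool" where
  "cutting \<sigma> z p x \<longleftrightarrow> (\<forall>k. \<sigma> (x k) = window z (p k) (p (k + 1) - 1))"

lemma cutting_translate: "cutting \<sigma> z p x \<Longrightarrow> cutting \<sigma> (\<lambda>i. z (i + d)) (\<lambda>k. p k - d) x"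
  unfolding cutting_def window_translate by simp

lemma cutting_shift: "cutting \<sigma> z p x \<Longrightarrow> cutting \<sigma> z (\<lambda>k. p (k + 1)) (shift x)"
  unfolding cutting_def shift_def by simp

locale nonerasing =
  fixes \<sigma> :: "'a \<Rightarrow> 'a list"
  assumes nonerasing: "\<sigma> a \<noteq> []"
begin

lemma subst_iter_ne: "subst_iter \<sigma> k a \<noteq> []"
  by (induction k) (auto simp: subst_iter_Suc subst_word_def nonerasing)

lemma length_subst_iter_mono:
  assumes "j \<le> k"
  shows "length (subst_iter \<sigma> j a) \<le> length (subst_iter \<sigma> k a)"
proof -
  have "1 * length (subst_iter \<sigma> j a)
      \<le> length (concat (map (subst_iter \<sigma> (k - j)) (subst_iter \<sigma> j a)))"
    by (rule length_concat_map_ge) (auto simp: subst_iter_ne Suc_le_eq)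
  then show ?thesis using assms by (simp add: subst_iter_add[symmetric])
qed

lemma cutting_step:
  assumes "cutting \<sigma> z p x"
  shows "p (k + 1) = p k + int (length (\<sigma> (x k)))"
proof -
  have "length (\<sigma> (x k)) = nat (p (k + 1) - 1 - p k + 1)"
    using assms unfolding cutting_def by (metis length_window)
  moreover have "length (\<sigma> (x k)) > 0" using nonerasing by simp
  ultimately show ?thesis by linarith
qed

lemma cutting_strict_mono: "cutting \<sigma> z p x \<Longrightarrow> strict_mono p"
  by (intro strict_mono_int) (use cutting_step nonerasing in fastforce)

lemma cutting_nth:
  "cutting \<sigma> z p x \<Longrightarrow> i < length (\<sigma> (x k)) \<Longrightarrow> z (p k + int i) = \<sigma> (x k) ! i"
  unfolding cutting_def by (metis length_window nth_window)

lemma cutting_unique_seq: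
  assumes "cutting \<sigma> z p x" "cutting \<sigma> z' p x"
  shows "z = z'"
proof
  fix n
  obtain k where k: "p k \<le> n" "n < p (k + 1)"
    using strict_mono_int_interval[OF cutting_strict_mono[OF assms(1)]] by blast
  define i where "i = nat (n - p k)"
  have n: "n = p k + int i" using k unfolding i_def by simp
  have "i < length (\<sigma> (x k))" using k cutting_step[OF assms(1), of k] unfolding i_def by simp
  then show "z n = z' n" unfolding n using cutting_nth assms by metis
qed

lemma subst_pos_0 [simp]: "subst_pos \<sigma> x 0 = 0"
  by (simp add: subst_pos_def)

lemma subst_pos_step: "subst_pos \<sigma> x (k + 1) = subst_pos \<sigma> x k + int (length (\<sigma> (x k)))"
proof (cases "0 \<le> k")
  case True
  then have "{0..<k + 1} = insert k {0..<k}" by auto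
  then show ?thesis using True by (simp add: subst_pos_def)
next
  case False
  then have "{k..<0} = insert k {k + 1..<0}" by auto
  then show ?thesis using False by (cases "k + 1 = 0") (auto simp: subst_pos_def)
qed

lemma subst_pos_1: "subst_pos \<sigma> x 1 = int (length (\<sigma> (x 0)))"
  using subst_pos_step[of x 0] by simp

lemma strict_mono_subst_pos: "strict_mono (subst_pos \<sigma> x)"
  by (intro strict_mono_int) (use subst_pos_step nonerasing in fastforce)

lemma subst_seq_eq:
  assumes "subst_pos \<sigma> x k \<le> n" "n < subst_pos \<sigma> x (k + 1)"
  shows "subst_seq \<sigma> x n = \<sigma> (x k) ! nat (n - subst_pos \<sigma> x k)"
proof -
  have "(THE k. subst_pos \<sigma> x k \<le> n \<and> n < subst_pos \<sigma> x (k + 1)) = k"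
    using assms strict_mono_int_interval_unique[OF strict_mono_subst_pos] by blast
  then show ?thesis unfolding subst_seq_def Let_def by simp
qed

lemma cutting_subst_seq: "cutting \<sigma> (subst_seq \<sigma> x) (subst_pos \<sigma> x) x"
  unfolding cutting_def
proof
  fix k
  show "\<sigma> (x k) = window (subst_seq \<sigma> x) (subst_pos \<sigma> x k) (subst_pos \<sigma> x (k + 1) - 1)"
  proof (rule nth_equalityI)
    fix i assume i: "i < length (\<sigma> (x k))"
    then have "window (subst_seq \<sigma> x) (subst_pos \<sigma> x k) (subst_pos \<sigma> x (k + 1) - 1) ! i
        = subst_seq \<sigma> x (subst_pos \<sigma> x k + int i)"
      by (simp add: nth_window subst_pos_step)
    also have "\<dots> = \<sigma> (x k) ! i"
      using i by (subst subst_seq_eq[of _ k]) (auto simp: subst_pos_step)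
    finally show "\<sigma> (x k) ! i
      = window (subst_seq \<sigma> x) (subst_pos \<sigma> x k) (subst_pos \<sigma> x (k + 1) - 1) ! i" ..
  qed (simp add: subst_pos_step)
qed

lemma cutting_imp_subst_pos: "cutting \<sigma> z p x \<Longrightarrow> p 0 = 0 \<Longrightarrow> p = subst_pos \<sigma> x"
proof
  fix k
  assume "cutting \<sigma> z p x" "p 0 = 0"
  then show "p k = subst_pos \<sigma> x k"
  proof (induction k rule: int_induct[where k = 0])
    case (step2 i)
    then show ?case using cutting_step[of z p x "i - 1"] subst_pos_step[of x "i - 1"] by simp
  qed (simp_all add: cutting_step subst_pos_step)
qed

lemma cutting_imp_subst_seq:
  "cutting \<sigma> z p x \<Longrightarrow> p 0 = 0 \<Longrightarrow> z = subst_seq \<sigma> x \<and> p = subst_pos \<sigma> x"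
  using cutting_imp_subst_pos cutting_unique_seq cutting_subst_seq by metis

lemma cutting_concat:
  assumes cut: "cutting \<sigma> z p x" and "a \<le> b"
  shows "window z (p a) (p (b + 1) - 1) = concat (map (\<sigma> \<circ> x) [a..b])"
  using assms(2)
proof (induction b rule: int_ge_induct)
  case base
  then show ?case using cut unfolding cutting_def by simp
next
  case (step i)
  have mono: "strict_mono p" by (rule cutting_strict_mono[OF cut])
  have "p a \<le> p (i + 1)" "p (i + 1) \<le> p (i + 1 + 1) - 1 + 1"
    using strict_mono_less_eq[OF mono, of a "i + 1"] strict_monoD[OF mono, of "i + 1" "i + 1 + 1"]
      step(1) by auto
  then have "window z (p a) (p (i + 1 + 1) - 1)
      = window z (p a) (p (i + 1) - 1) @ window z (p (i + 1)) (p (i + 1 + 1) - 1)"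
    by (rule window_append)
  also have "\<dots> = concat (map (\<sigma> \<circ> x) [a..i]) @ \<sigma> (x (i + 1))"
    using cut unfolding step.IH cutting_def by simp
  also have "\<dots> = concat (map (\<sigma> \<circ> x) [a..i + 1])"
    using step(1) upto_rec2[of a "i + 1"] by simp
  finally show ?case .
qed

lemma subst_seq_shift: "(shift ^^ length (\<sigma> (x 0))) (subst_seq \<sigma> x) = subst_seq \<sigma> (shift x)"
proof -
  define L where "L = length (\<sigma> (x 0))"
  have "cutting \<sigma> (\<lambda>i. subst_seq \<sigma> x (i + int L)) (\<lambda>k. subst_pos \<sigma> x (k + 1) - int L) (shift x)"
    by (intro cutting_translate cutting_shift cutting_subst_seq)
  moreover have "subst_pos \<sigma> x (0 + 1) - int L = 0"
    using subst_pos_1 unfolding L_def by simp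
  ultimately have "(\<lambda>i. subst_seq \<sigma> x (i + int L)) = subst_seq \<sigma> (shift x)"
    using cutting_imp_subst_seq by simp
  then show ?thesis unfolding L_def by (simp add: funpow_shift)
qed

end

locale gen_subst =
  fixes \<sigma> :: "'a::metric_space \<Rightarrow> 'a list"
  assumes alphabet: "alphabet_space (UNIV :: 'a set)"
    and gen_subst: "gen_substitution \<sigma>"

sublocale gen_subst \<subseteq> nonerasing
  using gen_subst unfolding gen_substitution_def by unfold_locales blast

context gen_subst
begin

lemma compact_alphabet: "compact (UNIV :: 'a set)"
  using alphabet unfolding alphabet_space_def by simp

lemma open_length_subst: "open {a. length (\<sigma> a) \<in> N}"
proof -
  have "continuous_on UNIV (\<lambda>a. length (\<sigma> a))"
    using gen_subst unfolding gen_substitution_def by blast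
  then have "open ((\<lambda>a. length (\<sigma> a)) -` N)"
    by (intro open_vimage) (simp_all add: open_discrete)
  then show ?thesis by (simp add: vimage_def)
qed

lemma word_continuous_at_subst: "word_continuous_at \<sigma> a"
  unfolding word_continuous_at_def
proof (intro allI impI)
  fix e :: real assume "e > 0"
  have "open {b. length (\<sigma> b) \<in> {length (\<sigma> a)}}" by (rule open_length_subst)
  then have same_length: "\<forall>\<^sub>F b in nhds a. length (\<sigma> b) = length (\<sigma> a)"
    unfolding eventually_nhds by auto
  have "\<forall>\<^sub>F b in nhds a. dist (\<sigma> b ! i) (\<sigma> a ! i) < e" if i: "i < length (\<sigma> a)" for i
  proof -
    have "continuous_on {b. i < length (\<sigma> b)} (\<lambda>b. \<sigma> b ! i)"
      using gen_subst unfolding gen_substitution_def by blast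
    moreover have "open {b. i < length (\<sigma> b)}"
      using open_length_subst[of "{i<..}"] by simp
    ultimately have "isCont (\<lambda>b. \<sigma> b ! i) a"
      using i continuous_on_eq_continuous_at by blast
    then have "((\<lambda>b. \<sigma> b ! i) \<longlongrightarrow> \<sigma> a ! i) (nhds a)"
      using tendsto_at_iff_tendsto_nhds[of "\<lambda>b. \<sigma> b ! i" a] by (simp add: isCont_def)
    then show ?thesis using \<open>e > 0\<close> tendstoD by blast
  qed
  then have "\<forall>\<^sub>F b in nhds a. \<forall>i\<in>{..<length (\<sigma> a)}. dist (\<sigma> b ! i) (\<sigma> a ! i) < e"
    by (intro eventually_ball_finite) auto
  with same_length show "\<forall>\<^sub>F b in nhds a. close_words e (\<sigma> b) (\<sigma> a)"
    by eventually_elim (auto simp: close_words_def list_all2_conv_all_nth)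
qed

lemma word_continuous_at_subst_iter: "word_continuous_at (subst_iter \<sigma> k) a"
proof (induction k arbitrary: a)
  case 0
  have "\<forall>\<^sub>F b in nhds a. dist b a < e" if "e > 0" for e
    unfolding eventually_nhds_metric using that by blast
  then show ?case by (simp add: word_continuous_at_def close_words_def)
next
  case (Suc k)
  show ?case unfolding subst_iter_Suc subst_word_def
    by (rule word_continuous_at_concat_map[OF Suc word_continuous_at_subst])
qed

lemma open_length_subst_iter_eq: "open {a. length (subst_iter \<sigma> k a) = n}"
proof (rule Topological_Spaces.openI)
  fix a assume a: "a \<in> {a. length (subst_iter \<sigma> k a) = n}"
  have "\<forall>\<^sub>F b in nhds a. length (subst_iter \<sigma> k b) = length (subst_iter \<sigma> k a)"
    by (rule word_continuous_at_length[OF word_continuous_at_subst_iter])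
  then obtain T where "open T" "a \<in> T" "\<forall>b\<in>T. length (subst_iter \<sigma> k b) = length (subst_iter \<sigma> k a)"
    unfolding eventually_nhds by blast
  with a show "\<exists>T. open T \<and> a \<in> T \<and> T \<subseteq> {a. length (subst_iter \<sigma> k a) = n}"
    by blast
qed

lemma length_subst_iter_bounded: "\<exists>M. \<forall>a. length (subst_iter \<sigma> k a) \<le> M"
proof -
  obtain N where "finite N" and N: "UNIV \<subseteq> (\<Union>n\<in>N. {a. length (subst_iter \<sigma> k a) = n})"
    by (rule compactE_image[OF compact_alphabet, of UNIV "\<lambda>n. {a. length (subst_iter \<sigma> k a) = n}"])
      (simp_all add: open_length_subst_iter_eq subset_eq)
  from \<open>finite N\<close> obtain M where "\<forall>n\<in>N. n \<le> M"
    unfolding finite_nat_set_iff_bounded_le by blast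
  with N show ?thesis by blast
qed

lemma length_subst_bounded: "\<exists>M. \<forall>a. length (\<sigma> a) \<le> M"
  using length_subst_iter_bounded[of 1] by (simp add: subst_iter_Suc subst_word_def)

lemma subst_pos_eq_if_lengths_eq:
  assumes "\<forall>k\<in>{-B..B}. length (\<sigma> (x k)) = length (\<sigma> (y k))" "- B \<le> k" "k \<le> B + 1"
  shows "subst_pos \<sigma> x k = subst_pos \<sigma> y k"
proof -
  have "(\<Sum>i\<in>{0..<k}. length (\<sigma> (x i))) = (\<Sum>i\<in>{0..<k}. length (\<sigma> (y i)))" if "0 \<le> k"
    using assms that by (intro sum.cong) auto
  moreover have "(\<Sum>i\<in>{k..<0}. length (\<sigma> (x i))) = (\<Sum>i\<in>{k..<0}. length (\<sigma> (y i)))" if "\<not> 0 \<le> k"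
    using assms that by (intro sum.cong) auto
  ultimately show ?thesis unfolding subst_pos_def by simp
qed

lemma subst_pos_ge: "0 \<le> k \<Longrightarrow> k \<le> subst_pos \<sigma> x k"
  using strict_mono_int_add_le[OF strict_mono_subst_pos[of x], of 0 k] by simp

lemma subst_pos_le: "k \<le> 0 \<Longrightarrow> subst_pos \<sigma> x k \<le> k"
  using strict_mono_int_add_le[OF strict_mono_subst_pos[of x], of k 0] by simp

lemma eventually_nhds_subst_pos_eq: "\<forall>\<^sub>F x in nhds x0. subst_pos \<sigma> x k = subst_pos \<sigma> x0 k"
proof -
  have "\<forall>\<^sub>F x in nhds x0. \<forall>j\<in>{-\<bar>k\<bar>..\<bar>k\<bar>}. length (\<sigma> (x j)) = length (\<sigma> (x0 j))"
    by (intro eventually_ball_finite ballI eventually_nhds_coordinate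
        word_continuous_at_length word_continuous_at_subst) simp
  then show ?thesis by eventually_elim (rule subst_pos_eq_if_lengths_eq[where B = "\<bar>k\<bar>"]; simp)
qed

lemma isCont_subst_seq_coordinate: "isCont (\<lambda>x. subst_seq \<sigma> x n) x0"
proof -
  obtain k where k: "subst_pos \<sigma> x0 k \<le> n" "n < subst_pos \<sigma> x0 (k + 1)"
    using strict_mono_int_interval[OF strict_mono_subst_pos] by blast
  define i where "i = nat (n - subst_pos \<sigma> x0 k)"
  have i: "i < length (\<sigma> (x0 k))" using k subst_pos_step[of x0 k] unfolding i_def by simp
  have value0: "subst_seq \<sigma> x0 n = \<sigma> (x0 k) ! i"
    unfolding i_def using k by (rule subst_seq_eq)
  have locally_eq: "\<forall>\<^sub>F x in nhds x0. subst_seq \<sigma> x n = \<sigma> (x k) ! i"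
    using eventually_nhds_subst_pos_eq[of k x0] eventually_nhds_subst_pos_eq[of "k + 1" x0]
  proof eventually_elim
    case (elim x)
    then show ?case using k subst_seq_eq[of x k n] by (simp add: i_def)
  qed
  have "((\<lambda>x. \<sigma> (x k) ! i) \<longlongrightarrow> \<sigma> (x0 k) ! i) (nhds x0)"
  proof (rule tendstoI)
    fix e :: real assume "e > 0"
    have "\<forall>\<^sub>F b in nhds (x0 k). close_words e (\<sigma> b) (\<sigma> (x0 k))"
      using word_continuous_at_subst \<open>e > 0\<close> unfolding word_continuous_at_def by blast
    then have "\<forall>\<^sub>F b in nhds (x0 k). dist (\<sigma> b ! i) (\<sigma> (x0 k) ! i) < e"
      by eventually_elim (use i in \<open>auto simp: close_words_def list_all2_conv_all_nth\<close>)
    then show "\<forall>\<^sub>F x in nhds x0. dist (\<sigma> (x k) ! i) (\<sigma> (x0 k) ! i) < e"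
      by (rule eventually_nhds_coordinate)
  qed
  then have "((\<lambda>x. subst_seq \<sigma> x n) \<longlongrightarrow> subst_seq \<sigma> x0 n) (nhds x0)"
    unfolding value0 tendsto_cong[OF locally_eq] .
  then show ?thesis
    using tendsto_at_iff_tendsto_nhds[of "\<lambda>x. subst_seq \<sigma> x n" x0] by (simp add: isCont_def)
qed

lemma continuous_on_subst_seq: "continuous_on UNIV (subst_seq \<sigma>)"
  by (intro continuous_on_coordinatewise_then_product continuous_at_imp_continuous_on ballI
      isCont_subst_seq_coordinate)

end

section \<open>The subshift of a primitive substitution\<close>

lemma language_of_closed:
  assumes "w \<noteq> []" "\<And>e. e > 0 \<Longrightarrow> \<exists>v\<in>language_of \<sigma> a. approx_occurs_at e w v 0"
  shows "w \<in> language_of \<sigma> a"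
  unfolding language_of_iff
proof (intro conjI allI impI)
  fix e :: real assume "e > 0"
  then obtain v where v: "v \<in> language_of \<sigma> a" "approx_occurs_at (e/2) w v 0"
    using assms(2)[of "e/2"] by auto
  then obtain j t where "approx_occurs_at (e/2) v (subst_iter \<sigma> j a) t"
    using \<open>e > 0\<close> unfolding language_of_iff by (meson half_gt_zero)
  from approx_occurs_at_trans[OF v(2) this] show "\<exists>j t. approx_occurs_at e w (subst_iter \<sigma> j a) t"
    by auto
qed (fact assms(1))

lemma language_of_subword:
  "w \<in> language_of \<sigma> a \<Longrightarrow> occurs_at v w t \<Longrightarrow> v \<noteq> [] \<Longrightarrow> v \<in> language_of \<sigma> a"
  unfolding language_of_iff using occurs_at_approx_occurs_at_trans by blast

lemma compact_sequence_space:
  assumes "compact (UNIV :: 'a::metric_space set)"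
  shows "compact (UNIV :: (int \<Rightarrow> 'a) set)"
proof -
  have "compact_space (euclidean :: 'a topology)"
    using assms by (simp add: compact_space_def compactin_euclidean_iff)
  then have "compact_space (euclidean :: (int \<Rightarrow> 'a) topology)"
    by (metis compact_space_product_topology euclidean_product_topology)
  then show ?thesis by (simp add: compact_space_def compactin_euclidean_iff)
qed

context gen_subst
begin

lemma language_of_subst_word:
  assumes w: "w \<in> language_of \<sigma> a"
  shows "subst_word \<sigma> w \<in> language_of \<sigma> a"
  unfolding language_of_iff
proof (intro conjI allI impI)
  show "subst_word \<sigma> w \<noteq> []"
    using w nonerasing unfolding language_of_iff by (cases w) auto
  fix e :: real assume "e > 0"
  then obtain d where "d > 0"
    and d: "\<forall>i<length w. \<forall>b. dist b (w ! i) < d \<longrightarrow> close_words e (\<sigma> b) (\<sigma> (w ! i))"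
    using word_continuous_at_uniform[of w \<sigma> e] word_continuous_at_subst by blast
  obtain j t where o: "approx_occurs_at d w (subst_iter \<sigma> j a) t"
    using w \<open>d > 0\<close> unfolding language_of_iff by blast
  define u where "u = take (length w) (drop t (subst_iter \<sigma> j a))"
  have "close_words e (subst_word \<sigma> u) (subst_word \<sigma> w)"
    unfolding subst_word_def u_def
    by (intro close_words_concat list_all2_close_words_image[OF d]
        approx_occurs_at_take_drop(1)[OF o])
  then have "approx_occurs_at e (subst_word \<sigma> w) (subst_word \<sigma> u) 0"
    by (rule close_words_imp_approx_occurs_at)
  moreover have "sublist (subst_word \<sigma> u) (subst_iter \<sigma> (Suc j) a)"
    unfolding u_def subst_iter_Suc
    by (intro sublist_subst_word) (metis approx_occurs_at_take_drop(2)[OF o] sublist_iff_occurs_at)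
  then obtain s where "occurs_at (subst_word \<sigma> u) (subst_iter \<sigma> (Suc j) a) s"
    unfolding sublist_iff_occurs_at by blast
  ultimately show "\<exists>j t. approx_occurs_at e (subst_word \<sigma> w) (subst_iter \<sigma> j a) t"
    using approx_occurs_at_occurs_at_trans by blast
qed

end

locale primitive_gen_subst = gen_subst +
  assumes primitive: "primitive \<sigma>"
begin

lemma primitive_occurs:
  "open V \<Longrightarrow> V \<noteq> {} \<Longrightarrow> \<exists>j. \<forall>a k. j \<le> k \<longrightarrow> (\<exists>x\<in>set (subst_iter \<sigma> k a). x \<in> V)"
  using primitive unfolding primitive_def by blast

lemma length_subst_iter_ge_2: "\<exists>j. \<forall>a k. j \<le> k \<longrightarrow> 2 \<le> length (subst_iter \<sigma> k a)"
proof -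
  obtain p q :: 'a where "p \<noteq> q" using alphabet unfolding alphabet_space_def by blast
  define d where "d = dist p q / 2"
  have "d > 0" using \<open>p \<noteq> q\<close> by (simp add: d_def)
  obtain j1 where j1: "\<forall>a k. j1 \<le> k \<longrightarrow> (\<exists>x\<in>set (subst_iter \<sigma> k a). x \<in> ball p d)"
    using primitive_occurs[of "ball p d"] \<open>d > 0\<close> by auto
  obtain j2 where j2: "\<forall>a k. j2 \<le> k \<longrightarrow> (\<exists>x\<in>set (subst_iter \<sigma> k a). x \<in> ball q d)"
    using primitive_occurs[of "ball q d"] \<open>d > 0\<close> by auto
  have "2 \<le> length (subst_iter \<sigma> k a)" if "max j1 j2 \<le> k" for a k
  proof -
    have "j1 \<le> k" "j2 \<le> k" using that by simp_all
    then obtain x y where xy: "x \<in> set (subst_iter \<sigma> k a)" "y \<in> set (subst_iter \<sigma> k a)"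
        "dist p x < d" "dist q y < d"
      using j1 j2 by (meson mem_ball)
    have "x \<noteq> y"
    proof
      assume "x = y"
      with xy(3,4) have "dist p q < d + d" by (intro dist_triangle_less_add) simp_all
      then show False by (simp add: d_def)
    qed
    with xy(1,2) have "card {x, y} \<le> card (set (subst_iter \<sigma> k a))"
      by (intro card_mono) simp_all
    also have "\<dots> \<le> length (subst_iter \<sigma> k a)" by (rule card_length)
    finally show ?thesis using \<open>x \<noteq> y\<close> by simp
  qed
  then show ?thesis by blast
qed

lemma length_subst_iter_unbounded: "\<exists>j. \<forall>a k. j \<le> k \<longrightarrow> N \<le> length (subst_iter \<sigma> k a)"
proof -
  obtain j where j: "\<forall>a k. j \<le> k \<longrightarrow> 2 \<le> length (subst_iter \<sigma> k a)"
    using length_subst_iter_ge_2 by blast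
  have pow: "2 ^ m \<le> length (subst_iter \<sigma> (m * j) a)" for m a
  proof (induction m arbitrary: a)
    case (Suc m)
    have "2 * length (subst_iter \<sigma> (m * j) a)
        \<le> length (concat (map (subst_iter \<sigma> j) (subst_iter \<sigma> (m * j) a)))"
      by (rule length_concat_map_ge) (use j in auto)
    then show ?case using Suc[of a] by (simp add: subst_iter_add[symmetric] add.commute)
  qed simp
  have "N \<le> length (subst_iter \<sigma> k a)" if "N * j \<le> k" for a k
  proof -
    have "N < 2 ^ N" by (rule less_exp)
    also have "\<dots> \<le> length (subst_iter \<sigma> (N * j) a)" by (rule pow)
    also have "\<dots> \<le> length (subst_iter \<sigma> k a)" by (rule length_subst_iter_mono[OF that])
    finally show ?thesis by simp
  qed
  then show ?thesis by blast
qed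

text \<open>\<open>\<sigma>\<^sup>P(c)\<close> contains a letter \<open>b\<close> so close to \<open>a\<close> that \<open>\<sigma>\<^sup>j(b)\<close> is close to \<open>\<sigma>\<^sup>j(a)\<close>.\<close>
lemma approx_occurs_at_subst_iter_uniformly:
  assumes "w \<in> language_of \<sigma> a" "e > 0"
  shows "\<exists>P. \<forall>c. \<exists>s. approx_occurs_at e w (subst_iter \<sigma> P c) s"
proof -
  obtain j t where o: "approx_occurs_at (e/2) w (subst_iter \<sigma> j a) t"
    using assms unfolding language_of_iff by (meson half_gt_zero)
  obtain d where "d > 0"
    and d: "\<forall>b. dist b a < d \<longrightarrow> close_words (e/2) (subst_iter \<sigma> j b) (subst_iter \<sigma> j a)"
    using word_continuous_at_subst_iter[of j a] assms(2)
    unfolding word_continuous_at_def eventually_nhds_metric by (meson half_gt_zero)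
  obtain P where P: "\<forall>c k. P \<le> k \<longrightarrow> (\<exists>x\<in>set (subst_iter \<sigma> k c). x \<in> ball a d)"
    using primitive_occurs[of "ball a d"] \<open>d > 0\<close> by auto
  have "\<exists>s. approx_occurs_at e w (subst_iter \<sigma> (j + P) c) s" for c
  proof -
    obtain b where b: "b \<in> set (subst_iter \<sigma> P c)" "dist a b < d" using P by auto
    obtain s where s: "occurs_at (subst_iter \<sigma> j b) (subst_iter \<sigma> (j + P) c) s"
      using occurs_at_concat_map[OF b(1), of "subst_iter \<sigma> j"] by (auto simp: subst_iter_add)
    have "approx_occurs_at (e/2) (subst_iter \<sigma> j a) (subst_iter \<sigma> j b) 0"
      using d b(2) by (intro close_words_imp_approx_occurs_at) (simp add: dist_commute)
    from approx_occurs_at_trans[OF o this] have "approx_occurs_at e w (subst_iter \<sigma> j b) t"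
      by simp
    then show ?thesis using approx_occurs_at_occurs_at_trans[OF _ s] by blast
  qed
  then show ?thesis by blast
qed

lemma language_eq_language_of: "language \<sigma> = language_of \<sigma> a"
proof -
  have "w \<in> language_of \<sigma> a" if "w \<in> language_of \<sigma> b" for w b
    unfolding language_of_iff
  proof (intro conjI allI impI)
    show "w \<noteq> []" using that unfolding language_of_iff by blast
    fix e :: real assume "e > 0"
    then show "\<exists>j t. approx_occurs_at e w (subst_iter \<sigma> j a) t"
      using approx_occurs_at_subst_iter_uniformly[OF that] by blast
  qed
  then show ?thesis unfolding language_def by blast
qed

lemma mem_subshift_iff: "x \<in> subshift \<sigma> \<longleftrightarrow> (\<forall>n::nat. window x (- int n) (int n) \<in> language_of \<sigma> a)"
  unfolding subshift_def language_eq_language_of[of a] by simp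

lemma window_mem_language_of:
  assumes "x \<in> subshift \<sigma>" "m \<le> n"
  shows "window x m n \<in> language_of \<sigma> a"
proof -
  define N where "N = nat (max \<bar>m\<bar> \<bar>n\<bar>)"
  have "window x (- int N) (int N) \<in> language_of \<sigma> a"
    using assms(1) mem_subshift_iff by blast
  moreover have "- int N \<le> m" "n \<le> int N" unfolding N_def by auto
  then have "occurs_at (window x m n) (window x (- int N) (int N)) (nat (m - - int N))"
    using assms(2) by (intro occurs_at_window)
  ultimately show ?thesis
    using window_ne[OF assms(2)] by (rule language_of_subword)
qed

lemma translate_mem_subshift:
  assumes "x \<in> subshift \<sigma>"
  shows "(\<lambda>i. x (i + d)) \<in> subshift \<sigma>"
  unfolding mem_subshift_iff[of _ undefined] window_translate
  using window_mem_language_of[OF assms] by simp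

lemma shift_mem_subshift: "x \<in> subshift \<sigma> \<Longrightarrow> shift x \<in> subshift \<sigma>"
  unfolding shift_def by (rule translate_mem_subshift)

lemma funpow_shift_mem_subshift: "x \<in> subshift \<sigma> \<Longrightarrow> (shift ^^ m) x \<in> subshift \<sigma>"
  unfolding funpow_shift by (rule translate_mem_subshift)

lemma limit_mem_subshift:
  assumes lim: "f \<longlonglongrightarrow> l"
    and windows: "\<And>n. \<forall>\<^sub>F k in sequentially. window (f k) (- int n) (int n) \<in> language_of \<sigma> a"
  shows "l \<in> subshift \<sigma>"
  unfolding mem_subshift_iff[of _ a]
proof
  fix n :: nat
  show "window l (- int n) (int n) \<in> language_of \<sigma> a"
  proof (rule language_of_closed)
    fix e :: real assume "e > 0"
    have "\<forall>i\<in>{- int n..int n}. \<forall>\<^sub>F k in sequentially. dist (f k i) (l i) < e"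
    proof
      fix i
      have "((\<lambda>k. f k i) \<longlongrightarrow> l i) sequentially"
        using isCont_tendsto_compose[OF isCont_coordinate lim] .
      then show "\<forall>\<^sub>F k in sequentially. dist (f k i) (l i) < e" using \<open>e > 0\<close> by (rule tendstoD)
    qed
    then have "\<forall>\<^sub>F k in sequentially. \<forall>i\<in>{- int n..int n}. dist (f k i) (l i) < e"
      by (rule eventually_ball_finite[rotated]) simp
    then have "\<forall>\<^sub>F k in sequentially. (\<forall>i\<in>{- int n..int n}. dist (f k i) (l i) < e)
        \<and> window (f k) (- int n) (int n) \<in> language_of \<sigma> a"
      using windows[of n] by (rule eventually_conj)
    then obtain k where k: "\<forall>i\<in>{- int n..int n}. dist (f k i) (l i) < e"
        "window (f k) (- int n) (int n) \<in> language_of \<sigma> a"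
      unfolding eventually_sequentially by blast
    moreover have
      "approx_occurs_at e (window l (- int n) (int n)) (window (f k) (- int n) (int n)) 0"
      using k(1) unfolding approx_occurs_at_def by (auto simp: nth_window)
    ultimately show "\<exists>v\<in>language_of \<sigma> a. approx_occurs_at e (window l (- int n) (int n)) v 0"
      by blast
  qed (simp add: window_ne)
qed

lemma closed_subshift: "closed (subshift \<sigma>)"
  unfolding closed_sequential_limits
proof (intro allI impI)
  fix f l assume "(\<forall>k. f k \<in> subshift \<sigma>) \<and> f \<longlonglongrightarrow> l"
  then show "l \<in> subshift \<sigma>"
    using window_mem_language_of
    by (intro limit_mem_subshift[of f l undefined]) (auto intro!: always_eventually)
qed

lemma compact_subshift: "compact (subshift \<sigma>)"
  using compact_Int_closed[OF compact_sequence_space[OF compact_alphabet] closed_subshift] by simp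

lemma subshift_nonempty: "subshift \<sigma> \<noteq> {}"
proof -
  have "\<forall>k. \<exists>j. \<forall>a. 2 * k + 1 \<le> length (subst_iter \<sigma> j a)"
    using length_subst_iter_unbounded by blast
  then obtain K where K: "\<And>k a. 2 * k + 1 \<le> length (subst_iter \<sigma> (K k) a)"
    by metis
  fix a :: 'a
  define z where
    "z k i = (if - int k \<le> i \<and> i \<le> int k then subst_iter \<sigma> (K k) a ! nat (i + int k) else a)"
    for k i
  obtain l r where r: "strict_mono r" "(z \<circ> r) \<longlonglongrightarrow> l"
    using compact_imp_seq_compact[OF compact_sequence_space[OF compact_alphabet]]
    unfolding seq_compact_def by blast
  have "window (z (r k)) (- int n) (int n) \<in> language_of \<sigma> a" if "n \<le> k" for n k
  proof -
    have "k \<le> r k" using r(1) by (simp add: strict_mono_imp_increasing)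
    moreover have "nat (int i - int n + int (r k)) = r k + i - n" for i
      using \<open>k \<le> r k\<close> that by arith
    ultimately have
      "occurs_at (window (z (r k)) (- int n) (int n)) (subst_iter \<sigma> (K (r k)) a) (r k - n)"
      using K[of "r k" a] that unfolding occurs_at_def z_def by (auto simp: nth_window)
    then show ?thesis
      unfolding language_of_iff by (auto simp: window_ne dest: occurs_at_imp_approx_occurs_at)
  qed
  then have "l \<in> subshift \<sigma>"
    by (intro limit_mem_subshift[OF r(2)]) (auto simp: eventually_sequentially)
  then show ?thesis by blast
qed

lemma subst_seq_mem_subshift:
  assumes x: "x \<in> subshift \<sigma>"
  shows "subst_seq \<sigma> x \<in> subshift \<sigma>"
  unfolding mem_subshift_iff[of _ undefined]
proof
  fix n :: nat
  let ?z = "subst_seq \<sigma> x" and ?p = "subst_pos \<sigma> x" and ?K = "int n + 1"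
  have "window ?z (?p (- ?K)) (?p (?K + 1) - 1) = concat (map (\<sigma> \<circ> x) [- ?K..?K])"
    by (rule cutting_concat[OF cutting_subst_seq]) simp
  also have "\<dots> = subst_word \<sigma> (window x (- ?K) ?K)"
    by (simp add: subst_word_def window_def)
  also have "\<dots> \<in> language_of \<sigma> undefined"
    by (intro language_of_subst_word window_mem_language_of[OF x]) simp
  finally have "window ?z (?p (- ?K)) (?p (?K + 1) - 1) \<in> language_of \<sigma> undefined" .
  moreover have "?p (- ?K) \<le> - int n" "int n \<le> ?p (?K + 1) - 1"
    using subst_pos_le[of "- ?K" x] subst_pos_ge[of "?K + 1" x] by simp_all
  then have "occurs_at (window ?z (- int n) (int n)) (window ?z (?p (- ?K)) (?p (?K + 1) - 1))
      (nat (- int n - ?p (- ?K)))"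
    by (intro occurs_at_window) simp_all
  ultimately show "window ?z (- int n) (int n) \<in> language_of \<sigma> undefined"
    by (rule language_of_subword) (simp add: window_ne)
qed

end

section \<open>Minimality and the Cantor property\<close>

lemma totally_disconnected_sequence_space:
  fixes S :: "(int \<Rightarrow> 'a::metric_space) set"
  assumes zero_dim: "zero_dimensional_space (UNIV :: 'a set)"
  shows "totally_disconnected_set S"
  unfolding totally_disconnected_set_def
proof (intro allI impI ballI)
  fix C x y assume C: "C \<subseteq> S \<and> connected C" and "x \<in> C" "y \<in> C"
  show "x = y"
  proof (rule ccontr)
    assume "x \<noteq> y"
    then obtain i where "x i \<noteq> y i" by (meson ext)
    have clopen_nbhd: "\<forall>(U :: 'a set) z. open U \<and> z \<in> U \<longrightarrow> (\<exists>V. open V \<and> closed V \<and> z \<in> V \<and> V \<subseteq> U)"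
      using zero_dim unfolding zero_dimensional_space_def by simp
    have centre: "x i \<in> ball (x i) (dist (x i) (y i))" using \<open>x i \<noteq> y i\<close> by simp
    obtain V where V: "open V" "closed V" "x i \<in> V" "V \<subseteq> ball (x i) (dist (x i) (y i))"
      using clopen_nbhd[rule_format, OF conjI[OF open_ball centre]] by blast
    define D where "D = (\<lambda>z. z i) ` C"
    have "continuous_on C (\<lambda>z. z i)"
      by (rule continuous_on_subset[OF continuous_on_product_coordinates]) simp
    then have "connected D" unfolding D_def by (rule connected_continuous_image) (use C in auto)
    moreover have "openin (top_of_set D) (D \<inter> V)" "closedin (top_of_set D) (D \<inter> V)"
      using V(1,2) by (auto intro: openin_open_Int closedin_closed_Int)
    ultimately have "D \<inter> V = {} \<or> D \<inter> V = D" using connected_clopen by blast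
    moreover have "x i \<in> D \<inter> V" using \<open>x \<in> C\<close> V(3) unfolding D_def by blast
    moreover have "y i \<notin> ball (x i) (dist (x i) (y i))" by simp
    then have "y i \<in> D - V" using \<open>y \<in> C\<close> V(4) unfolding D_def by blast
    ultimately show False by blast
  qed
qed


context primitive_gen_subst
begin

lemma approx_occurs_at_block_in_long_word:
  assumes v: "v \<in> language_of \<sigma> a" and "e > 0"
    and M: "\<forall>c. length (subst_iter \<sigma> P c) \<le> M" and "2 * M < length v"
  shows "\<exists>c t. approx_occurs_at e (subst_iter \<sigma> P c) v t"
proof -
  obtain J T where JT: "approx_occurs_at e v (subst_iter \<sigma> J a) T"
    using v \<open>e > 0\<close> unfolding language_of_iff by blast
  then have JT_length: "T + length v \<le> length (subst_iter \<sigma> J a)"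
    unfolding approx_occurs_at_def by simp
  have "P \<le> J"
  proof (rule ccontr)
    assume "\<not> P \<le> J"
    then have "length (subst_iter \<sigma> J a) \<le> length (subst_iter \<sigma> P a)"
      by (intro length_subst_iter_mono) simp
    also have "\<dots> \<le> M" using M by blast
    finally have "length (subst_iter \<sigma> J a) \<le> M" .
    with JT_length \<open>2 * M < length v\<close> show False by simp
  qed
  then have blocks: "subst_iter \<sigma> J a = concat (map (subst_iter \<sigma> P) (subst_iter \<sigma> (J - P) a))"
    using subst_iter_add[of \<sigma> P "J - P" a] by simp
  have "\<exists>c\<in>set (subst_iter \<sigma> (J - P) a). \<exists>s. T \<le> s \<and> s + length (subst_iter \<sigma> P c) \<le> T + length v
      \<and> occurs_at (subst_iter \<sigma> P c) (subst_iter \<sigma> J a) s"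
    unfolding blocks
    by (rule occurs_at_concat_map_within[where M = M])
      (use M JT_length \<open>2 * M < length v\<close> blocks in auto)
  then obtain c s where "T \<le> s" "s + length (subst_iter \<sigma> P c) \<le> T + length v"
      "occurs_at (subst_iter \<sigma> P c) (subst_iter \<sigma> J a) s"
    by blast
  then show ?thesis using approx_occurs_at_within[OF JT] by blast
qed

lemma shift_orbit_enters_open:
  assumes x: "x \<in> subshift \<sigma>" and y: "y \<in> subshift \<sigma>" and "open U" "x \<in> U"
  shows "\<exists>m. (shift ^^ m) y \<in> U"
proof -
  fix a :: 'a
  obtain n e where "e > 0"
    and U: "\<forall>z. (\<forall>i. - int n \<le> i \<and> i \<le> int n \<longrightarrow> dist (z i) (x i) < e) \<longrightarrow> z \<in> U"
    using cylinder_subset_open[OF \<open>open U\<close> \<open>x \<in> U\<close>] by blast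
  define w where "w = window x (- int n) (int n)"
  have "w \<in> language_of \<sigma> a" unfolding w_def using x by (intro window_mem_language_of) auto
  then obtain P where P: "\<forall>c. \<exists>s. approx_occurs_at (e/2) w (subst_iter \<sigma> P c) s"
    using approx_occurs_at_subst_iter_uniformly \<open>e > 0\<close> by (meson half_gt_zero)
  obtain M where M: "\<forall>c. length (subst_iter \<sigma> P c) \<le> M"
    using length_subst_iter_bounded by blast
  define v where "v = window y 0 (int (2 * M))"
  have "v \<in> language_of \<sigma> a" unfolding v_def using y by (intro window_mem_language_of) auto
  moreover have "2 * M < length v" unfolding v_def by simp
  ultimately obtain c t where t: "approx_occurs_at (e/2) (subst_iter \<sigma> P c) v t"
    using approx_occurs_at_block_in_long_word[OF _ _ M] \<open>e > 0\<close> by (meson half_gt_zero)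
  obtain s where "approx_occurs_at (e/2) w (subst_iter \<sigma> P c) s" using P by blast
  from approx_occurs_at_trans[OF this t] have "approx_occurs_at e w v (t + s)" by simp
  then have "(shift ^^ (t + s + n)) y \<in> U"
    using U approx_occurs_at_window_shift unfolding w_def v_def by blast
  then show ?thesis by blast
qed

lemma minimal_subshift: "minimal_system (subshift \<sigma>) shift"
  unfolding minimal_system_def
proof (intro conjI allI impI)
  show "subshift \<sigma> \<noteq> {}" by (rule subshift_nonempty)
  fix Y assume Y: "Y \<subseteq> subshift \<sigma> \<and> closedin (top_of_set (subshift \<sigma>)) Y \<and> Y \<noteq> {} \<and> shift ` Y \<subseteq> Y"
  then obtain F where F: "closed F" "Y = subshift \<sigma> \<inter> F" by (metis closedin_closed)
  obtain y where "y \<in> Y" using Y by blast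
  then have orbit: "(shift ^^ m) y \<in> Y" for m by (induction m) (use Y in auto)
  show "Y = subshift \<sigma>"
  proof (rule ccontr)
    assume "Y \<noteq> subshift \<sigma>"
    then obtain x where "x \<in> subshift \<sigma>" "x \<in> - F" using F by auto
    then obtain m where "(shift ^^ m) y \<in> - F"
      using shift_orbit_enters_open \<open>y \<in> Y\<close> Y F(1) by (metis open_Compl subsetD)
    then show False using orbit[of m] F by auto
  qed
qed

lemma homeomorphism_shift: "homeomorphism (subshift \<sigma>) (subshift \<sigma>) shift (\<lambda>x i. x (i - 1))"
proof (rule homeomorphismI)
  show "continuous_on (subshift \<sigma>) shift" "continuous_on (subshift \<sigma>) (\<lambda>x i. x (i - 1))"
    unfolding shift_def by (auto intro: continuous_on_subset[OF continuous_on_reindex])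
  show "shift ` subshift \<sigma> \<subseteq> subshift \<sigma>" using shift_mem_subshift by blast
  show "(\<lambda>x i. x (i - 1)) ` subshift \<sigma> \<subseteq> subshift \<sigma>"
    using translate_mem_subshift[of _ "- 1"] by auto
qed (simp_all add: shift_def)

lemma subshift_islimpt:
  assumes "aperiodic \<sigma>" "x \<in> subshift \<sigma>"
  shows "x islimpt subshift \<sigma>"
  unfolding islimpt_def
proof (intro allI impI)
  fix U assume "x \<in> U" "open U"
  then obtain m where "(shift ^^ m) (shift x) \<in> U"
    using shift_orbit_enters_open[OF assms(2) shift_mem_subshift[OF assms(2)]] by blast
  then have "(shift ^^ Suc m) x \<in> U" by (simp only: funpow_Suc_right comp_apply)
  moreover have "(shift ^^ Suc m) x \<noteq> x" using assms unfolding aperiodic_def by blast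
  moreover have "(shift ^^ Suc m) x \<in> subshift \<sigma>" using assms(2) by (rule funpow_shift_mem_subshift)
  ultimately show "\<exists>y\<in>subshift \<sigma>. y \<in> U \<and> y \<noteq> x" by blast
qed

lemma minimal_cantor_subshift:
  assumes "aperiodic \<sigma>"
  shows "minimal_cantor_system (subshift \<sigma>) shift"
proof -
  have "totally_disconnected_set (subshift \<sigma>)"
    using alphabet totally_disconnected_sequence_space unfolding alphabet_space_def by blast
  then have "cantor_set (subshift \<sigma>)"
    unfolding cantor_set_def
    using subshift_nonempty compact_subshift subshift_islimpt[OF assms] by blast
  then show ?thesis
    unfolding minimal_cantor_system_def using homeomorphism_shift minimal_subshift by blast
qed

end

section \<open>Recognizability and self-induction\<close>

context primitive_gen_subst
begin

lemma recognizable_cutting_unique: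
  assumes "recognizable \<sigma>" "z \<in> subshift \<sigma>"
    and "x \<in> subshift \<sigma>" "cutting \<sigma> z p x" "p 0 \<le> 0" "0 < p 1"
    and "x' \<in> subshift \<sigma>" "cutting \<sigma> z p' x'" "p' 0 \<le> 0" "0 < p' 1"
  shows "range p = range p' \<and> x = x'"
proof -
  define Q where "Q = (\<lambda>(C, x). x \<in> subshift \<sigma> \<and> (\<exists>n::int \<Rightarrow> int. C = range n \<and> n 0 \<le> 0 \<and> 0 < n 1 \<and>
      (\<forall>k. \<sigma> (x k) = window z (n k) (n (k + 1) - 1))))"
  have "\<exists>!q. Q q" unfolding Q_def by (rule bspec[OF assms(1)[unfolded recognizable_def] assms(2)])
  moreover have "Q (range p, x)"
    unfolding Q_def using assms(3-6) unfolding cutting_def by (simp, intro exI[of _ p]) simp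
  moreover have "Q (range p', x')"
    unfolding Q_def using assms(7-10) unfolding cutting_def by (simp, intro exI[of _ p']) simp
  ultimately have "(range p, x) = (range p', x')" by (metis ex1E)
  then show ?thesis by simp
qed

lemma recognizable_cutting_exists:
  assumes "recognizable \<sigma>" "z \<in> subshift \<sigma>"
  obtains x p where "x \<in> subshift \<sigma>" "p 0 \<le> 0" "0 < p 1" "cutting \<sigma> z p x"
proof -
  obtain q where "case q of (C, x) \<Rightarrow> x \<in> subshift \<sigma> \<and> (\<exists>n::int \<Rightarrow> int. C = range n \<and> n 0 \<le> 0
      \<and> 0 < n 1 \<and> (\<forall>k. \<sigma> (x k) = window z (n k) (n (k + 1) - 1)))"
    using bspec[OF assms(1)[unfolded recognizable_def] assms(2)] by (rule ex1E)
  then show ?thesis using that unfolding cutting_def by (cases q) blast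
qed

lemma inj_on_subst_seq:
  assumes "recognizable \<sigma>"
  shows "inj_on (subst_seq \<sigma>) (subshift \<sigma>)"
proof
  fix x y assume x: "x \<in> subshift \<sigma>" and y: "y \<in> subshift \<sigma>" and eq: "subst_seq \<sigma> x = subst_seq \<sigma> y"
  have "cutting \<sigma> (subst_seq \<sigma> x) (subst_pos \<sigma> x) x" by (rule cutting_subst_seq)
  moreover have "cutting \<sigma> (subst_seq \<sigma> x) (subst_pos \<sigma> y) y"
    unfolding eq by (rule cutting_subst_seq)
  moreover have "0 < subst_pos \<sigma> x 1" "0 < subst_pos \<sigma> y 1"
    using subst_pos_1 nonerasing by simp_all
  ultimately show "x = y"
    using recognizable_cutting_unique[OF assms subst_seq_mem_subshift[OF x] x _ _ _ y] by simp
qed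

text \<open>A visit would give a second cutting of the same point, with \<open>0\<close> among its cut points.\<close>
lemma funpow_shift_subst_seq_notin_image:
  assumes "recognizable \<sigma>" "x \<in> subshift \<sigma>" "0 < m" "m < length (\<sigma> (x 0))"
  shows "(shift ^^ m) (subst_seq \<sigma> x) \<notin> subst_seq \<sigma> ` subshift \<sigma>"
proof
  assume "(shift ^^ m) (subst_seq \<sigma> x) \<in> subst_seq \<sigma> ` subshift \<sigma>"
  then obtain y where y: "y \<in> subshift \<sigma>" "(shift ^^ m) (subst_seq \<sigma> x) = subst_seq \<sigma> y" by blast
  define z where "z = (shift ^^ m) (subst_seq \<sigma> x)"
  have "z \<in> subshift \<sigma>"
    unfolding z_def by (intro funpow_shift_mem_subshift subst_seq_mem_subshift assms(2))
  moreover have "cutting \<sigma> z (\<lambda>k. subst_pos \<sigma> x k - int m) x"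
    unfolding z_def funpow_shift by (rule cutting_translate[OF cutting_subst_seq])
  moreover have "cutting \<sigma> z (subst_pos \<sigma> y) y" unfolding z_def y(2) by (rule cutting_subst_seq)
  ultimately have "range (\<lambda>k. subst_pos \<sigma> x k - int m) = range (subst_pos \<sigma> y)"
    using recognizable_cutting_unique[OF assms(1) _ assms(2) _ _ _ y(1)] assms(3,4)
      subst_pos_1[of x] subst_pos_1[of y] nonerasing[of "y 0"] by simp
  moreover have "0 \<in> range (subst_pos \<sigma> y)" by (metis rangeI subst_pos_0)
  ultimately obtain k where k: "subst_pos \<sigma> x k = int m"
    by (metis (no_types, lifting) eq_iff_diff_eq_0 imageE)
  have mono: "strict_mono (subst_pos \<sigma> x)" by (rule strict_mono_subst_pos)
  show False
  proof (cases "k \<le> 0")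
    case True
    then have "subst_pos \<sigma> x k \<le> subst_pos \<sigma> x 0" using strict_mono_less_eq[OF mono] by blast
    then show False using k assms(3) by simp
  next
    case False
    then have "subst_pos \<sigma> x 1 \<le> subst_pos \<sigma> x k" using strict_mono_less_eq[OF mono] by simp
    then show False using k assms(4) subst_pos_1[of x] by simp
  qed
qed

lemma mem_subshift_imp_shifted_subst_seq:
  assumes "recognizable \<sigma>" "z \<in> subshift \<sigma>"
  shows "\<exists>x\<in>subshift \<sigma>. \<exists>m < length (\<sigma> (x 0)). z = (shift ^^ m) (subst_seq \<sigma> x)"
proof -
  obtain x p where x: "x \<in> subshift \<sigma>" and p: "p 0 \<le> 0" "0 < p 1" and cut: "cutting \<sigma> z p x"
    using recognizable_cutting_exists[OF assms] .
  have "cutting \<sigma> (\<lambda>i. z (i + p 0)) (\<lambda>k. p k - p 0) x" by (rule cutting_translate[OF cut])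
  then have z: "(\<lambda>i. z (i + p 0)) = subst_seq \<sigma> x" using cutting_imp_subst_seq by simp
  define m where "m = nat (- p 0)"
  have "m < length (\<sigma> (x 0))" using cutting_step[OF cut, of 0] p unfolding m_def by simp
  moreover have "z = (shift ^^ m) (subst_seq \<sigma> x)"
  proof
    fix i
    have "(shift ^^ m) (subst_seq \<sigma> x) i = z (i + int m + p 0)"
      by (simp add: funpow_shift z[symmetric])
    then show "z i = (shift ^^ m) (subst_seq \<sigma> x) i" using p(1) unfolding m_def by simp
  qed
  ultimately show ?thesis using x by blast
qed

lemma expanding_letter: "\<exists>b. 2 \<le> length (\<sigma> b)"
proof (rule ccontr)
  assume "\<nexists>b. 2 \<le> length (\<sigma> b)"
  have one: "length (\<sigma> b) = 1" for b
  proof -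
    have "length (\<sigma> b) < 2" using \<open>\<nexists>b. 2 \<le> length (\<sigma> b)\<close> by (simp add: not_le)
    moreover have "0 < length (\<sigma> b)" using nonerasing by simp
    ultimately show ?thesis by linarith
  qed
  have "length (concat (map \<sigma> w)) = length w" for w by (induction w) (simp_all add: one)
  then have "length (subst_iter \<sigma> k a) = 1" for k a
    by (induction k) (simp_all add: subst_iter_Suc subst_word_def)
  then show False using length_subst_iter_ge_2 by fastforce
qed

lemma expanding_letter_in_subshift: "\<exists>x\<in>subshift \<sigma>. 2 \<le> length (\<sigma> (x 0))"
proof -
  define V where "V = {b. length (\<sigma> b) \<in> {2..}}"
  have "V \<noteq> {}" using expanding_letter unfolding V_def by auto
  moreover have "open V" unfolding V_def by (rule open_length_subst)
  ultimately obtain P where P: "\<forall>a k. P \<le> k \<longrightarrow> (\<exists>y\<in>set (subst_iter \<sigma> k a). y \<in> V)"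
    using primitive_occurs by blast
  obtain M where M: "\<forall>c. length (subst_iter \<sigma> P c) \<le> M" using length_subst_iter_bounded by blast
  obtain x where x: "x \<in> subshift \<sigma>" using subshift_nonempty by blast
  fix a :: 'a
  define v where "v = window x 0 (int (2 * M))"
  obtain d where "d > 0"
    and d: "\<forall>i<length v. \<forall>b. dist b (v ! i) < d \<longrightarrow> close_words 1 (\<sigma> b) (\<sigma> (v ! i))"
    using word_continuous_at_uniform[of v \<sigma> 1, OF word_continuous_at_subst zero_less_one] by blast
  have "v \<in> language_of \<sigma> a" unfolding v_def using x by (intro window_mem_language_of) auto
  moreover have "2 * M < length v" unfolding v_def by simp
  ultimately obtain c t where ct: "approx_occurs_at d (subst_iter \<sigma> P c) v t"
    using approx_occurs_at_block_in_long_word[OF _ \<open>d > 0\<close> M] by blast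
  obtain y where "y \<in> set (subst_iter \<sigma> P c)" "y \<in> V" using P by blast
  then obtain q where q: "q < length (subst_iter \<sigma> P c)" "subst_iter \<sigma> P c ! q \<in> V"
    by (auto simp: in_set_conv_nth)
  then have "t + q < length v" "dist (subst_iter \<sigma> P c ! q) (v ! (t + q)) < d"
    using ct unfolding approx_occurs_at_def by (auto simp: dist_commute)
  then have "close_words 1 (\<sigma> (subst_iter \<sigma> P c ! q)) (\<sigma> (v ! (t + q)))" using d by blast
  then have "length (\<sigma> (subst_iter \<sigma> P c ! q)) = length (\<sigma> (v ! (t + q)))"
    unfolding close_words_def by (rule list_all2_lengthD)
  moreover have "v ! (t + q) = (shift ^^ (t + q)) x 0"
    using \<open>t + q < length v\<close> unfolding v_def by (simp add: nth_window funpow_shift)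
  ultimately have "2 \<le> length (\<sigma> ((shift ^^ (t + q)) x 0))" using q(2) unfolding V_def by simp
  then show ?thesis using funpow_shift_mem_subshift[OF x] by blast
qed

lemma return_time_subst_seq:
  assumes "recognizable \<sigma>" "x \<in> subshift \<sigma>"
  shows "return_time shift (subst_seq \<sigma> ` subshift \<sigma>) (subst_seq \<sigma> x) = length (\<sigma> (x 0))"
  unfolding return_time_def
proof (rule Least_equality)
  show "0 < length (\<sigma> (x 0))
      \<and> (shift ^^ length (\<sigma> (x 0))) (subst_seq \<sigma> x) \<in> subst_seq \<sigma> ` subshift \<sigma>"
    using nonerasing subst_seq_shift shift_mem_subshift[OF assms(2)] by auto
  fix m assume "0 < m \<and> (shift ^^ m) (subst_seq \<sigma> x) \<in> subst_seq \<sigma> ` subshift \<sigma>"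
  then show "length (\<sigma> (x 0)) \<le> m"
    using funpow_shift_subst_seq_notin_image[OF assms] by (meson not_le)
qed

lemma induced_map_subst_seq:
  assumes "recognizable \<sigma>" "x \<in> subshift \<sigma>"
  shows "induced_map shift (subst_seq \<sigma> ` subshift \<sigma>) (subst_seq \<sigma> x) = subst_seq \<sigma> (shift x)"
  unfolding induced_map_def return_time_subst_seq[OF assms] by (rule subst_seq_shift)

lemma homeomorphism_subst_seq:
  assumes "recognizable \<sigma>"
  obtains g where "homeomorphism (subshift \<sigma>) (subst_seq \<sigma> ` subshift \<sigma>) (subst_seq \<sigma>) g"
  using homeomorphism_compact[OF compact_subshift continuous_on_subset[OF continuous_on_subst_seq]
      refl inj_on_subst_seq[OF assms]] by blast

lemma conjugacy_subst_seq:
  assumes "recognizable \<sigma>"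
  shows "conjugacy (subst_seq \<sigma>) (subshift \<sigma>) shift
    (subst_seq \<sigma> ` subshift \<sigma>) (induced_map shift (subst_seq \<sigma> ` subshift \<sigma>))"
  unfolding conjugacy_def using homeomorphism_subst_seq[OF assms] induced_map_subst_seq[OF assms]
  by metis

lemma compact_shifted_subst_seq_image:
  "compact ((\<lambda>x. (shift ^^ m) (subst_seq \<sigma> x)) ` (subshift \<sigma> \<inter> {x. m < length (\<sigma> (x 0))}))"
proof -
  have "{x. m < length (\<sigma> (x 0))} = (\<lambda>x. x 0) -` (- {b. length (\<sigma> b) \<in> {..m}})" by auto
  then have "closed {x. m < length (\<sigma> (x 0))}"
    by (metis closed_vimage continuous_on_product_coordinates open_length_subst closed_Compl)
  then have "compact (subshift \<sigma> \<inter> {x. m < length (\<sigma> (x 0))})"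
    by (rule compact_Int_closed[OF compact_subshift])
  moreover have "continuous_on UNIV (\<lambda>x. (shift ^^ m) (subst_seq \<sigma> x))"
    unfolding funpow_shift
    using continuous_on_compose[OF continuous_on_subst_seq
        continuous_on_subset[OF continuous_on_reindex]]
    by (simp add: comp_def)
  ultimately show ?thesis by (metis compact_continuous_image continuous_on_subset subset_UNIV)
qed

lemma subshift_diff_subst_seq_image:
  assumes "recognizable \<sigma>" "\<And>a. length (\<sigma> a) \<le> M"
  shows "subshift \<sigma> - subst_seq \<sigma> ` subshift \<sigma>
    = (\<Union>m\<in>{1..M}. (\<lambda>x. (shift ^^ m) (subst_seq \<sigma> x)) ` (subshift \<sigma> \<inter> {x. m < length (\<sigma> (x 0))}))"
    (is "_ = (\<Union>m\<in>{1..M}. ?A m)")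
proof
  show "subshift \<sigma> - subst_seq \<sigma> ` subshift \<sigma> \<subseteq> (\<Union>m\<in>{1..M}. ?A m)"
  proof
    fix z assume z: "z \<in> subshift \<sigma> - subst_seq \<sigma> ` subshift \<sigma>"
    then obtain x m where "x \<in> subshift \<sigma>" "m < length (\<sigma> (x 0))" "z = (shift ^^ m) (subst_seq \<sigma> x)"
      using mem_subshift_imp_shifted_subst_seq[OF assms(1)] by blast
    moreover from this z have "m \<noteq> 0" by auto
    ultimately show "z \<in> (\<Union>m\<in>{1..M}. ?A m)" using assms(2)[of "x 0"] by force
  qed
  show "(\<Union>m\<in>{1..M}. ?A m) \<subseteq> subshift \<sigma> - subst_seq \<sigma> ` subshift \<sigma>"
  proof
    fix z assume "z \<in> (\<Union>m\<in>{1..M}. ?A m)"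
    then obtain m x where "1 \<le> m" "x \<in> subshift \<sigma>" "m < length (\<sigma> (x 0))"
        "z = (shift ^^ m) (subst_seq \<sigma> x)"
      by auto
    then show "z \<in> subshift \<sigma> - subst_seq \<sigma> ` subshift \<sigma>"
      using funpow_shift_subst_seq_notin_image[OF assms(1), of x m]
      by (simp add: funpow_shift_mem_subshift subst_seq_mem_subshift)
  qed
qed

lemma closed_subshift_diff_subst_seq_image:
  assumes "recognizable \<sigma>"
  shows "closed (subshift \<sigma> - subst_seq \<sigma> ` subshift \<sigma>)"
proof -
  obtain M where M: "\<And>a. length (\<sigma> a) \<le> M" using length_subst_bounded by blast
  show ?thesis
    unfolding subshift_diff_subst_seq_image[OF assms M]
    by (intro closed_UN finite_atLeastAtMost ballI compact_imp_closed
        compact_shifted_subst_seq_image)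
qed

lemma openin_subst_seq_image:
  assumes "recognizable \<sigma>"
  shows "openin (top_of_set (subshift \<sigma>)) (subst_seq \<sigma> ` subshift \<sigma>)"
proof -
  let ?X = "subshift \<sigma>" and ?Z = "subst_seq \<sigma> ` subshift \<sigma>"
  have "openin (top_of_set ?X) (?X \<inter> - (?X - ?Z))"
    by (intro openin_open_Int open_Compl closed_subshift_diff_subst_seq_image[OF assms])
  moreover have "?X \<inter> - (?X - ?Z) = ?Z" using subst_seq_mem_subshift by blast
  ultimately show ?thesis by simp
qed

lemma closedin_subst_seq_image: "closedin (top_of_set (subshift \<sigma>)) (subst_seq \<sigma> ` subshift \<sigma>)"
  using subst_seq_mem_subshift compact_continuous_image[OF
      continuous_on_subset[OF continuous_on_subst_seq] compact_subshift]
  by (simp add: closed_subset compact_imp_closed image_subset_iff)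

lemma subst_seq_image_ne_subshift:
  assumes "recognizable \<sigma>"
  shows "subst_seq \<sigma> ` subshift \<sigma> \<noteq> subshift \<sigma>"
proof -
  obtain x where "x \<in> subshift \<sigma>" "2 \<le> length (\<sigma> (x 0))"
    using expanding_letter_in_subshift by blast
  then have "(shift ^^ 1) (subst_seq \<sigma> x) \<in> subshift \<sigma> - subst_seq \<sigma> ` subshift \<sigma>"
    using funpow_shift_subst_seq_notin_image[OF assms, of x 1]
    by (simp add: shift_mem_subshift subst_seq_mem_subshift)
  then show ?thesis by blast
qed

lemma self_induced_subshift:
  assumes "recognizable \<sigma>"
  shows "self_induced (subshift \<sigma>) shift"
proof -
  let ?X = "subshift \<sigma>" and ?Z = "subst_seq \<sigma> ` subshift \<sigma>"
  obtain g where g: "homeomorphism ?X ?Z (subst_seq \<sigma>) g"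
    using homeomorphism_subst_seq[OF assms] .
  have "conjugacy g ?Z (induced_map shift ?Z) ?X shift"
    unfolding conjugacy_def
  proof (intro conjI ballI)
    show "\<exists>h. homeomorphism ?Z ?X g h" using homeomorphism_symD[OF g] by blast
    fix z assume "z \<in> ?Z"
    then obtain x where x: "x \<in> ?X" "z = subst_seq \<sigma> x" by blast
    then have "g (induced_map shift ?Z z) = shift x"
      using g induced_map_subst_seq[OF assms x(1)] shift_mem_subshift[OF x(1)]
      unfolding homeomorphism_def by simp
    moreover have "g z = x" using g x unfolding homeomorphism_def by simp
    ultimately show "g (induced_map shift ?Z z) = shift (g z)" by simp
  qed
  moreover have "?Z \<noteq> {}" "?Z \<subseteq> ?X" using subshift_nonempty subst_seq_mem_subshift by auto
  ultimately show ?thesis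
    unfolding self_induced_def
    using openin_subst_seq_image[OF assms] closedin_subst_seq_image
      subst_seq_image_ne_subshift[OF assms]
    by (intro exI[of _ ?Z]) blast
qed

end

theorem mainTheorem3:
  fixes \<sigma> :: "'a::metric_space \<Rightarrow> 'a list"
  assumes "alphabet_space (UNIV :: 'a set)"
    and "gen_substitution \<sigma>"
    and "primitive \<sigma>"
  shows "minimal_system (subshift \<sigma>) shift
    \<and> (recognizable \<sigma> \<and> aperiodic \<sigma> \<longrightarrow>
         minimal_cantor_system (subshift \<sigma>) shift
       \<and> self_induced (subshift \<sigma>) shift
       \<and> conjugacy (subst_seq \<sigma>) (subshift \<sigma>) shift
            (subst_seq \<sigma> ` subshift \<sigma>) (induced_map shift (subst_seq \<sigma> ` subshift \<sigma>)))"
proof -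
  interpret primitive_gen_subst \<sigma> using assms by unfold_locales
  show ?thesis
    using minimal_subshift minimal_cantor_subshift self_induced_subshift conjugacy_subst_seq
    by blast
qed

end
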